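(* Let $p$ be a prime, let $c,d$ be positive integers, let $X$ be a set with $d$ elements, let $L_c(X)$ be the free nilpotent $\mathbb{Z}_p$-Lie algebra of class $c$ on $X$, regarded inside $\widetilde{L}_c(X)=L_c(X)\otimes_{\mathbb{Z}_p}\mathbb{Q}_p$, let $$\widehat{L}_c(X)=L_c(X)+\tfrac{1}{p}\gamma_2(L_c(X))+\dots+\tfrac{1}{p^{c-1}}\gamma_c(L_c(X)),$$ let $I$ be an ideal of $L_c(X)$ and let $$\widehat{I}=I+\tfrac{1}{p}[I,L_c(X)]+\dots+\tfrac{1}{p^{c-1}}[I,{}_{c-1}L_c(X)].$$ Then: (a) the order $\left|(L_c(X)\cap\widehat{I})/I\right|$ is bounded by a function of $p,c,d$ only; (b) the index $\left|\widehat{L}_c(X)/\widehat{I} : (L_c(X)+\widehat{I})/\widehat{I}\right|$ is bounded by a function of $p,c,d$ only.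
   Context: $L_c(X)$ is the free $\mathbb{Z}_p$-Lie algebra on $X$ modulo the $(c+1)$-st term of its lower central series; $\gamma_1(L)=L$, $\gamma_{i+1}(L)=[\gamma_i(L),L]$; $[I,{}_iL]=[\cdots[[I,L],L],\dots,L]$ with $i$ copies of $L$. Brackets of subsets denote $\mathbb{Z}_p$-spans of brackets. *)

theory Defs
  imports "HOL-Computational_Algebra.Primes" "HOL-Library.Cardinality" "HOL-Library.Function_Algebras"
begin

section \<open>The p-adic integers as the inverse limit of the rings Z/p^n\<close>

text \<open>The prime p is carried by a finite type 'p, with p = CARD('p); an element
  is a compatible sequence (f n) of residues modulo p^n, f n in [0, p^n).\<close>

typedef ('p::finite) padic_int =
  "{f :: nat \<Rightarrow> int. \<forall>n. f (Suc n) mod (int CARD('p)) ^ n = f n}"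
  by (rule exI[of _ "\<lambda>_. 0"]) simp

setup_lifting type_definition_padic_int

lemma padic_rep_mod:
  fixes m :: int
  assumes "\<And>n. f (Suc n) mod m ^ n = f n"
  shows "f n mod m ^ n = f n"
  using assms by (metis mod_mod_trivial)

lemma padic_compat_op:
  fixes m :: int
  assumes f: "\<And>n. f (Suc n) mod m ^ n = f n" and g: "\<And>n. g (Suc n) mod m ^ n = g n"
    and op: "\<And>a b c. (op (a mod c) (b mod c)) mod c = (op a b) mod c"
  shows "(op (f (Suc n)) (g (Suc n)) mod m ^ Suc n) mod m ^ n = op (f n) (g n) mod m ^ n"
proof -
  have d: "m ^ n dvd m ^ Suc n" by simp
  have "(op (f (Suc n)) (g (Suc n)) mod m ^ Suc n) mod m ^ n = op (f (Suc n)) (g (Suc n)) mod m ^ n"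
    using d by (simp add: mod_mod_cancel)
  also have "\<dots> = op (f (Suc n) mod m ^ n) (g (Suc n) mod m ^ n) mod m ^ n"
    by (simp add: op)
  finally show ?thesis using f g by simp
qed

lemma padic_compat_neg:
  fixes m :: int
  assumes f: "\<And>n. f (Suc n) mod m ^ n = f n"
  shows "(- f (Suc n) mod m ^ Suc n) mod m ^ n = (- f n) mod m ^ n"
proof -
  have d: "m ^ n dvd m ^ Suc n" by simp
  have "(- f (Suc n) mod m ^ Suc n) mod m ^ n = (- f (Suc n)) mod m ^ n"
    using d by (simp add: mod_mod_cancel)
  also have "\<dots> = (- (f (Suc n) mod m ^ n)) mod m ^ n"
    by (simp add: mod_minus_eq)
  finally show ?thesis using f by simp
qed

instantiation padic_int :: (card2) comm_ring_1
begin

lift_definition zero_padic_int :: "'a padic_int" is "\<lambda>n. 0" by simp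

lift_definition one_padic_int :: "'a padic_int" is "\<lambda>n. 1 mod (int CARD('a)) ^ n"
proof -
  fix n
  have "(int CARD('a)) ^ n dvd (int CARD('a)) ^ Suc n" by simp
  then show "1 mod int CARD('a) ^ Suc n mod int CARD('a) ^ n = 1 mod int CARD('a) ^ n"
    by (simp add: mod_mod_cancel)
qed

lift_definition plus_padic_int :: "'a padic_int \<Rightarrow> 'a padic_int \<Rightarrow> 'a padic_int"
  is "\<lambda>f g n. (f n + g n) mod (int CARD('a)) ^ n"
  by (rule padic_compat_op[where op="(+)"]) (auto simp: mod_add_eq)

lift_definition minus_padic_int :: "'a padic_int \<Rightarrow> 'a padic_int \<Rightarrow> 'a padic_int"
  is "\<lambda>f g n. (f n - g n) mod (int CARD('a)) ^ n"
  by (rule padic_compat_op[where op="(-)"]) (auto simp: mod_diff_eq)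

lift_definition uminus_padic_int :: "'a padic_int \<Rightarrow> 'a padic_int"
  is "\<lambda>f n. (- f n) mod (int CARD('a)) ^ n"
  by (rule padic_compat_neg)

lift_definition times_padic_int :: "'a padic_int \<Rightarrow> 'a padic_int \<Rightarrow> 'a padic_int"
  is "\<lambda>f g n. (f n * g n) mod (int CARD('a)) ^ n"
  by (rule padic_compat_op[where op="(*)"]) (auto simp: mod_mult_eq)

instance
proof
  fix a b c :: "'a padic_int"
  show "a + b + c = a + (b + c)"
    by transfer (rule ext, simp (no_asm) add: mod_add_left_eq mod_add_right_eq add.assoc)
  show "a + b = b + a" by transfer (rule ext, simp (no_asm) add: add.commute)
  show "0 + a = a" by transfer (rule ext, simp add: padic_rep_mod)
  show "- a + a = 0" by transfer (rule ext, simp (no_asm) add: mod_add_left_eq)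
  show "a - b = a + - b" by transfer (rule ext, simp (no_asm) add: mod_add_right_eq)
  show "a * b * c = a * (b * c)"
    by transfer (rule ext, simp (no_asm) add: mod_mult_left_eq mod_mult_right_eq mult.assoc)
  show "a * b = b * a" by transfer (rule ext, simp (no_asm) add: mult.commute)
  show "1 * a = a" by transfer (rule ext, simp add: mod_mult_left_eq padic_rep_mod)
  show "(a + b) * c = a * c + b * c"
    by transfer (rule ext, simp (no_asm) add: mod_mult_left_eq mod_add_eq distrib_right)
  show "(0::'a padic_int) \<noteq> 1"
  proof transfer
    have "2 \<le> CARD('a)" by (rule two_le_card)
    then have "(1::int) mod int CARD('a) ^ 1 = 1" by simp
    then show "(\<lambda>n. 0::int) \<noteq> (\<lambda>n. 1 mod int CARD('a) ^ n)"
      by (metis zero_neq_one)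
  qed
qed
end

abbreviation padic_p :: "'p::card2 padic_int" where
  "padic_p \<equiv> of_nat CARD('p)"

section \<open>The free (non-associative) magma algebra over a commutative ring\<close>

datatype 'x ltree = Leaf 'x | Node "'x ltree" "'x ltree"

text \<open>Elements: finitely supported coefficient functions on bracket monomials
  (binary trees) whose leaves lie in X.  Addition, subtraction, zero are pointwise.\<close>

definition magma_alg :: "'x set \<Rightarrow> ('x ltree \<Rightarrow> 'r::zero) set" where
  "magma_alg X = {f. finite {t. f t \<noteq> 0} \<and> (\<forall>t. f t \<noteq> 0 \<longrightarrow> set_ltree t \<subseteq> X)}"

definition smul :: "'r::times \<Rightarrow> ('a \<Rightarrow> 'r) \<Rightarrow> ('a \<Rightarrow> 'r)" where
  "smul r f = (\<lambda>t. r * f t)"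

definition br :: "('x ltree \<Rightarrow> 'r::{times,zero}) \<Rightarrow> ('x ltree \<Rightarrow> 'r) \<Rightarrow> ('x ltree \<Rightarrow> 'r)" where
  "br f g = (\<lambda>t. case t of Leaf _ \<Rightarrow> 0 | Node s u \<Rightarrow> f s * g u)"

inductive_set rspan :: "('a \<Rightarrow> 'r::comm_ring_1) set \<Rightarrow> ('a \<Rightarrow> 'r) set" for S where
  span_zero: "0 \<in> rspan S"
| span_base: "x \<in> S \<Longrightarrow> x \<in> rspan S"
| span_add: "x \<in> rspan S \<Longrightarrow> y \<in> rspan S \<Longrightarrow> x + y \<in> rspan S"
| span_smul: "x \<in> rspan S \<Longrightarrow> smul r x \<in> rspan S"

definition ssum :: "('a \<Rightarrow> 'r::plus) set \<Rightarrow> ('a \<Rightarrow> 'r) set \<Rightarrow> ('a \<Rightarrow> 'r) set" where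
  "ssum A B = {a + b | a b. a \<in> A \<and> b \<in> B}"

definition brs :: "('x ltree \<Rightarrow> 'r::comm_ring_1) set \<Rightarrow> ('x ltree \<Rightarrow> 'r) set \<Rightarrow> ('x ltree \<Rightarrow> 'r) set" where
  "brs A B = rspan {br a b | a b. a \<in> A \<and> b \<in> B}"

inductive_set magma_ideal_gen :: "'x set \<Rightarrow> ('x ltree \<Rightarrow> 'r::comm_ring_1) set \<Rightarrow> ('x ltree \<Rightarrow> 'r) set"
  for X S where
  mig_base: "x \<in> S \<Longrightarrow> x \<in> magma_ideal_gen X S"
| mig_zero: "0 \<in> magma_ideal_gen X S"
| mig_add: "x \<in> magma_ideal_gen X S \<Longrightarrow> y \<in> magma_ideal_gen X S \<Longrightarrow> x + y \<in> magma_ideal_gen X S"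
| mig_smul: "x \<in> magma_ideal_gen X S \<Longrightarrow> smul r x \<in> magma_ideal_gen X S"
| mig_right: "x \<in> magma_ideal_gen X S \<Longrightarrow> y \<in> magma_alg X \<Longrightarrow> br x y \<in> magma_ideal_gen X S"
| mig_left: "x \<in> magma_ideal_gen X S \<Longrightarrow> y \<in> magma_alg X \<Longrightarrow> br y x \<in> magma_ideal_gen X S"

section \<open>Free Lie algebra and free nilpotent Lie algebra (as quotients of the magma algebra)\<close>

text \<open>Relations of the free Lie algebra L(X) = magma_alg X / lie_rel X.\<close>
definition lie_rel :: "'x set \<Rightarrow> ('x ltree \<Rightarrow> 'r::comm_ring_1) set" where
  "lie_rel X = magma_ideal_gen X
     ({br a a | a. a \<in> magma_alg X} \<union>
      {br (br a b) c + br (br b c) a + br (br c a) b | a b c.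
          a \<in> magma_alg X \<and> b \<in> magma_alg X \<and> c \<in> magma_alg X})"

text \<open>free_lcs X i = preimage in magma_alg X of gamma_(i+1)(L(X)).\<close>
fun free_lcs :: "'x set \<Rightarrow> nat \<Rightarrow> ('x ltree \<Rightarrow> 'r::comm_ring_1) set" where
  "free_lcs X 0 = magma_alg X"
| "free_lcs X (Suc i) = ssum (brs (free_lcs X i) (magma_alg X)) (lie_rel X)"

text \<open>L_c(X) = magma_alg X / nil_rel X c, where nil_rel X c is the preimage of gamma_(c+1)(L(X)).\<close>
abbreviation nil_rel :: "'x set \<Rightarrow> nat \<Rightarrow> ('x ltree \<Rightarrow> 'r::comm_ring_1) set" where
  "nil_rel X c \<equiv> free_lcs X c"

text \<open>lc_lcs X c i = preimage in magma_alg X of gamma_(i+1)(L_c(X)).\<close>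
fun lc_lcs :: "'x set \<Rightarrow> nat \<Rightarrow> nat \<Rightarrow> ('x ltree \<Rightarrow> 'r::comm_ring_1) set" where
  "lc_lcs X c 0 = magma_alg X"
| "lc_lcs X c (Suc i) = ssum (brs (lc_lcs X c i) (magma_alg X)) (nil_rel X c)"

text \<open>Ideals of L_c(X), described by their preimages in magma_alg X.\<close>
definition is_lc_ideal :: "'x set \<Rightarrow> nat \<Rightarrow> ('x ltree \<Rightarrow> 'r::comm_ring_1) set \<Rightarrow> bool" where
  "is_lc_ideal X c I \<longleftrightarrow> nil_rel X c \<subseteq> I \<and> I \<subseteq> magma_alg X \<and>
     0 \<in> I \<and> (\<forall>x\<in>I. \<forall>y\<in>I. x + y \<in> I) \<and> (\<forall>r. \<forall>x\<in>I. smul r x \<in> I) \<and>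
     (\<forall>x\<in>I. \<forall>y\<in>magma_alg X. br x y \<in> I)"

text \<open>lc_comm X c I i = preimage of [I, _i L_c(X)].\<close>
fun lc_comm :: "'x set \<Rightarrow> nat \<Rightarrow> ('x ltree \<Rightarrow> 'r::comm_ring_1) set \<Rightarrow> nat \<Rightarrow> ('x ltree \<Rightarrow> 'r) set" where
  "lc_comm X c I 0 = I"
| "lc_comm X c I (Suc i) = ssum (brs (lc_comm X c I i) (magma_alg X)) (nil_rel X c)"

section \<open>The Q_p-span L_c(X) \<otimes> Q_p as the localization at p\<close>

text \<open>An element of L_c(X) \<otimes> Q_p = L_c(X)[1/p] is represented by a pair (k, m),
  m in magma_alg X, standing for (m + K)/p^k where K = nil_rel X c.\<close>
definition loc_eq :: "'r::comm_ring_1 \<Rightarrow> ('x ltree \<Rightarrow> 'r) set \<Rightarrow>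
    nat \<times> ('x ltree \<Rightarrow> 'r) \<Rightarrow> nat \<times> ('x ltree \<Rightarrow> 'r) \<Rightarrow> bool" where
  "loc_eq p K v w \<longleftrightarrow> (\<exists>t. smul (p ^ t) (smul (p ^ fst w) (snd v) - smul (p ^ fst v) (snd w)) \<in> K)"

definition loc_plus :: "'r::comm_ring_1 \<Rightarrow> nat \<times> ('x ltree \<Rightarrow> 'r) \<Rightarrow> nat \<times> ('x ltree \<Rightarrow> 'r)
    \<Rightarrow> nat \<times> ('x ltree \<Rightarrow> 'r)" where
  "loc_plus p v w = (fst v + fst w, smul (p ^ fst w) (snd v) + smul (p ^ fst v) (snd w))"

definition loc_minus :: "'r::comm_ring_1 \<Rightarrow> nat \<times> ('x ltree \<Rightarrow> 'r) \<Rightarrow> nat \<times> ('x ltree \<Rightarrow> 'r)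
    \<Rightarrow> nat \<times> ('x ltree \<Rightarrow> 'r)" where
  "loc_minus p v w = (fst v + fst w, smul (p ^ fst w) (snd v) - smul (p ^ fst v) (snd w))"

text \<open>Subsets of L_c(X) \<otimes> Q_p are given as sets of representatives, closed under loc_eq.
  frac_set p K e S is the image of (1/p^e) S for S \<subseteq> magma_alg X.\<close>
definition frac_set :: "'r::comm_ring_1 \<Rightarrow> ('x ltree \<Rightarrow> 'r) set \<Rightarrow> nat \<Rightarrow> ('x ltree \<Rightarrow> 'r) set
    \<Rightarrow> (nat \<times> ('x ltree \<Rightarrow> 'r)) set" where
  "frac_set p K e S = {v. \<exists>s\<in>S. loc_eq p K v (e, s)}"

definition loc_sum :: "'r::comm_ring_1 \<Rightarrow> ('x ltree \<Rightarrow> 'r) set \<Rightarrow> (nat \<times> ('x ltree \<Rightarrow> 'r)) set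
    \<Rightarrow> (nat \<times> ('x ltree \<Rightarrow> 'r)) set \<Rightarrow> (nat \<times> ('x ltree \<Rightarrow> 'r)) set" where
  "loc_sum p K A B = {v. \<exists>a\<in>A. \<exists>b\<in>B. loc_eq p K v (loc_plus p a b)}"

text \<open>frac_sum p K F n = F 0 + (1/p) F 1 + ... + (1/p^(n-1)) F (n-1).\<close>
fun frac_sum :: "'r::comm_ring_1 \<Rightarrow> ('x ltree \<Rightarrow> 'r) set \<Rightarrow> (nat \<Rightarrow> ('x ltree \<Rightarrow> 'r) set) \<Rightarrow> nat
    \<Rightarrow> (nat \<times> ('x ltree \<Rightarrow> 'r)) set" where
  "frac_sum p K F 0 = frac_set p K 0 {0}"
| "frac_sum p K F (Suc i) = loc_sum p K (frac_sum p K F i) (frac_set p K i (F i))"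

text \<open>The cosets of B in A (for subgroups B \<subseteq> A of L_c(X) \<otimes> Q_p); its cardinality is |A/B|.\<close>
definition loc_cosets :: "'r::comm_ring_1 \<Rightarrow> ('x ltree \<Rightarrow> 'r) set \<Rightarrow> (nat \<times> ('x ltree \<Rightarrow> 'r)) set
    \<Rightarrow> (nat \<times> ('x ltree \<Rightarrow> 'r)) set \<Rightarrow> (nat \<times> ('x ltree \<Rightarrow> 'r)) set set" where
  "loc_cosets p K A B = A // {(v, w). v \<in> A \<and> w \<in> A \<and> loc_minus p v w \<in> B}"

end

theory Submission
  imports Defs
begin

text \<open>L_c(X) is spanned, modulo gamma_(c+1), by the bracket monomials with at most c leaves, so
  it is generated by N(c,d) elements, and since the p-adic integers form a principal ideal domain
  so is every ideal I.  The hatted modules satisfy Ihat \<subseteq> p^(-c) I and Lhat \<subseteq> p^(-c) L_c(X),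
  and two elements of p^(-c) M whose numerators have the same coefficients modulo p^c lie in the
  same coset of M.  Hence both orders are at most (p^c)^N(c,d).\<close>

section \<open>The p-adic integers form a discrete valuation ring\<close>

abbreviation padic_residue :: "'p::card2 padic_int \<Rightarrow> nat \<Rightarrow> int" where
  "padic_residue \<equiv> Rep_padic_int"

lemma padic_residue_Suc_mod:
  "padic_residue a (Suc n) mod int CARD('p) ^ n = padic_residue (a::'p::card2 padic_int) n"
  using Rep_padic_int[of a] by auto

lemma padic_residue_mod:
  "padic_residue (a::'p::card2 padic_int) n mod int CARD('p) ^ n = padic_residue a n"
  by (rule padic_rep_mod) (rule padic_residue_Suc_mod)

lemma padic_residue_bounds:
  "0 \<le> padic_residue (a::'p::card2 padic_int) n \<and> padic_residue a n < int CARD('p) ^ n"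
proof -
  have "int CARD('p) ^ n > 0" by simp
  then show ?thesis using padic_residue_mod[of a n] pos_mod_bound pos_mod_sign by metis
qed

lemma padic_residue_0: "padic_residue (a::'p::card2 padic_int) 0 = 0"
  using padic_residue_mod[of a 0] by simp

lemma padic_residue_mod_le:
  "n \<le> m \<Longrightarrow> padic_residue (a::'p::card2 padic_int) m mod int CARD('p) ^ n = padic_residue a n"
proof (induction m)
  case 0 then show ?case using padic_residue_mod[of a 0] by simp
next
  case (Suc m)
  show ?case
  proof (cases "n = Suc m")
    case True then show ?thesis by (metis padic_residue_mod)
  next
    case False
    then have "n \<le> m" using Suc by simp
    then have "int CARD('p) ^ n dvd int CARD('p) ^ m" by (simp add: le_imp_power_dvd)
    then have "padic_residue a (Suc m) mod int CARD('p) ^ n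
        = (padic_residue a (Suc m) mod int CARD('p) ^ m) mod int CARD('p) ^ n"
      by (simp add: mod_mod_cancel)
    then show ?thesis using Suc \<open>n \<le> m\<close> by (simp add: padic_residue_Suc_mod)
  qed
qed

lemma padic_residue_of_nat:
  "padic_residue (of_nat k :: 'p::card2 padic_int) n = int k mod int CARD('p) ^ n"
proof (induction k)
  case 0 then show ?case by (simp add: zero_padic_int.rep_eq)
next
  case (Suc k)
  have "padic_residue (of_nat (Suc k) :: 'p padic_int) n
      = (1 mod int CARD('p) ^ n + int k mod int CARD('p) ^ n) mod int CARD('p) ^ n"
    by (simp add: plus_padic_int.rep_eq one_padic_int.rep_eq Suc)
  then show ?case by (simp add: mod_add_eq add.commute)
qed

lemma padic_residue_diff:
  "padic_residue (a - b :: 'p::card2 padic_int) n = (padic_residue a n - padic_residue b n) mod int CARD('p) ^ n"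
  by (simp add: minus_padic_int.rep_eq)

lemma padic_residue_mult:
  "padic_residue (a * b :: 'p::card2 padic_int) n = (padic_residue a n * padic_residue b n) mod int CARD('p) ^ n"
  by (simp add: times_padic_int.rep_eq)

lemma padic_eq_iff: "(a::'p::card2 padic_int) = b \<longleftrightarrow> (\<forall>n. padic_residue a n = padic_residue b n)"
  by (metis Rep_padic_int_inject ext)

lemma padic_residue_p_power: "padic_residue ((padic_p::'p::card2 padic_int) ^ n) n = 0"
  by (simp add: of_nat_power[symmetric] padic_residue_of_nat del: of_nat_power)

lemma padic_residue_eq_0_iff_dvd:
  "padic_residue (b::'p::card2 padic_int) n = 0 \<longleftrightarrow> padic_p ^ n dvd b"
proof
  assume "padic_p ^ n dvd b"
  then show "padic_residue b n = 0"
    by (auto simp: padic_residue_mult padic_residue_p_power)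
next
  assume b: "padic_residue b n = 0"
  define P where "P = int CARD('p)"
  have Ppos: "P > 0" unfolding P_def by simp
  define f where "f = padic_residue b"
  have "P ^ n dvd f j" if "n \<le> j" for j
    using padic_residue_mod_le[OF that, of b] b unfolding f_def P_def by (simp add: dvd_eq_mod_eq_0)
  then have fg: "f (m + n) = P ^ n * (f (m + n) div P ^ n)" for m
    by simp
  define g where "g m = f (m + n) div P ^ n" for m
  have gc: "g (Suc m) mod P ^ m = g m" for m
  proof -
    have "P ^ n * g m = f (Suc m + n) mod P ^ (m + n)"
      using padic_residue_Suc_mod[of b "m + n"] fg[of m] unfolding f_def P_def g_def by simp
    also have "\<dots> = (P ^ n * g (Suc m)) mod (P ^ n * P ^ m)"
      using fg[of "Suc m"] unfolding g_def power_add by (simp add: mult.commute)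
    also have "\<dots> = P ^ n * (g (Suc m) mod P ^ m)" by (rule mod_mult_mult1)
    finally show ?thesis using Ppos by simp
  qed
  define b' where "b' = (Abs_padic_int g :: 'p padic_int)"
  have rb': "padic_residue b' = g" unfolding b'_def
    by (rule Abs_padic_int_inverse) (simp add: gc[unfolded P_def] P_def)
  have "b = padic_p ^ n * b'"
  proof (subst padic_eq_iff, intro allI)
    fix m
    have "padic_residue (padic_p ^ n * b') m = ((P ^ n mod P ^ m) * g m) mod P ^ m"
      by (simp add: of_nat_power[symmetric] padic_residue_mult padic_residue_of_nat rb' P_def
          del: of_nat_power)
    also have "\<dots> = f (m + n) mod P ^ m" by (simp add: mod_mult_left_eq fg[of m, folded g_def])
    also have "\<dots> = f m" unfolding f_def P_def by (rule padic_residue_mod_le) simp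
    finally show "padic_residue b m = padic_residue (padic_p ^ n * b') m" unfolding f_def by simp
  qed
  then show "padic_p ^ n dvd b" by simp
qed

text \<open>The inverse is assembled from the inverses modulo every p^n.\<close>

lemma padic_unit:
  assumes p: "prime CARD('p)" and u: "padic_residue (u::'p::card2 padic_int) 1 \<noteq> 0"
  shows "u dvd 1"
proof -
  define P where "P = int CARD('p)"
  have Ppos: "P > 0" unfolding P_def by simp
  define f where "f = padic_residue u"
  have cop: "coprime (f n) (P ^ n)" for n
  proof (cases n)
    case (Suc m)
    have "f n mod P = f 1" using padic_residue_mod_le[of 1 n u] Suc unfolding f_def P_def by simp
    then have "\<not> P dvd f n" using u unfolding f_def by (simp add: dvd_eq_mod_eq_0)
    moreover have "prime P" using p unfolding P_def by simp
    ultimately have "coprime (f n) P" by (simp add: prime_imp_coprime coprime_commute)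
    then show ?thesis by simp
  qed simp
  define g where "g n = fst (bezout_coefficients (f n) (P ^ n)) mod P ^ n" for n
  have g: "0 \<le> g n \<and> g n < P ^ n \<and> (f n * g n) mod P ^ n = 1 mod P ^ n" for n
  proof -
    define a where "a = fst (bezout_coefficients (f n) (P ^ n))"
    define b where "b = snd (bezout_coefficients (f n) (P ^ n))"
    have "f n * a = 1 - b * P ^ n"
      using bezout_coefficients_fst_snd[of "f n" "P ^ n"] cop[of n] unfolding a_def b_def
      by (simp add: algebra_simps)
    then have "(f n * a) mod P ^ n = 1 mod P ^ n" by (simp add: mod_diff_eq[symmetric])
    then show ?thesis
      using Ppos unfolding g_def a_def by (simp add: mod_mult_right_eq)
  qed
  have g_unique: "h = g n" if "0 \<le> h" "h < P ^ n" "(f n * h) mod P ^ n = 1 mod P ^ n" for n h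
  proof -
    have "(f n * h) mod P ^ n = (f n * g n) mod P ^ n" using that g[of n] by simp
    then have "P ^ n dvd f n * (h - g n)" by (simp add: mod_eq_dvd_iff right_diff_distrib)
    then have "P ^ n dvd h - g n"
      using cop[of n] by (metis coprime_commute coprime_dvd_mult_right_iff)
    then have "h mod P ^ n = g n mod P ^ n" by (simp add: mod_eq_dvd_iff)
    then show ?thesis using that g[of n] by simp
  qed
  have g_compat: "g (Suc n) mod P ^ n = g n" for n
  proof (rule g_unique)
    have d: "P ^ n dvd P ^ Suc n" by simp
    have fS: "f (Suc n) mod P ^ n = f n"
      using padic_residue_Suc_mod[of u n] unfolding f_def P_def by simp
    have "(f n * (g (Suc n) mod P ^ n)) mod P ^ n
        = ((f (Suc n) mod P ^ n) * (g (Suc n) mod P ^ n)) mod P ^ n" by (simp only: fS)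
    also have "\<dots> = ((f (Suc n) * g (Suc n)) mod P ^ Suc n) mod P ^ n"
      using d by (simp add: mod_mult_eq mod_mod_cancel)
    also have "\<dots> = 1 mod P ^ n" using d g[of "Suc n"] by (simp add: mod_mod_cancel)
    finally show "(f n * (g (Suc n) mod P ^ n)) mod P ^ n = 1 mod P ^ n" .
  qed (use Ppos in auto)
  define v where "v = (Abs_padic_int g :: 'p padic_int)"
  have rv: "padic_residue v = g" unfolding v_def
    by (rule Abs_padic_int_inverse) (simp add: g_compat[unfolded P_def] P_def)
  have "u * v = 1"
    by (subst padic_eq_iff)
      (use g in \<open>simp add: padic_residue_mult rv one_padic_int.rep_eq f_def P_def\<close>)
  then show ?thesis by (metis dvd_triv_left)
qed

text \<open>An element of least p-adic valuation generates A, being a unit times p^k.\<close>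

lemma padic_ideal_principal:
  assumes p: "prime CARD('p)"
    and zero: "(0::'p::card2 padic_int) \<in> A"
    and add: "\<And>x y. x \<in> A \<Longrightarrow> y \<in> A \<Longrightarrow> x + y \<in> A"
    and mult: "\<And>r x. x \<in> A \<Longrightarrow> r * x \<in> A"
  shows "\<exists>a\<in>A. \<forall>b\<in>A. a dvd b"
proof (cases "A \<subseteq> {0}")
  case True then show ?thesis using zero by (intro bexI[of _ 0]) auto
next
  case False
  then obtain b0 where "b0 \<in> A" "b0 \<noteq> 0" by auto
  then obtain n0 where b0: "b0 \<in> A" "padic_residue b0 n0 \<noteq> 0"
    by (auto simp: padic_eq_iff zero_padic_int.rep_eq)
  then have ex: "\<exists>n. \<exists>b\<in>A. padic_residue b (Suc n) \<noteq> 0"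
    by (cases n0) (auto simp: padic_residue_0)
  define k where "k = (LEAST n. \<exists>b\<in>A. padic_residue b (Suc n) \<noteq> 0)"
  obtain a where a: "a \<in> A" "padic_residue a (Suc k) \<noteq> 0"
    using LeastI_ex[OF ex] unfolding k_def by blast
  have all_div: "padic_p ^ k dvd b" if "b \<in> A" for b
  proof (cases k)
    case (Suc k')
    then have "\<not> (\<exists>b\<in>A. padic_residue b (Suc k') \<noteq> 0)"
      using not_less_Least[of k' "\<lambda>n. \<exists>b\<in>A. padic_residue b (Suc n) \<noteq> 0"] unfolding k_def by simp
    then show ?thesis using that Suc padic_residue_eq_0_iff_dvd by blast
  qed simp
  obtain u where u: "a = padic_p ^ k * u" using all_div[OF a(1)] by (auto elim: dvdE)
  have "\<not> padic_p ^ 1 dvd u"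
  proof
    assume "padic_p ^ 1 dvd u"
    then have "padic_p ^ Suc k dvd a" using u by (simp add: mult_dvd_mono mult.commute)
    then show False using a(2) padic_residue_eq_0_iff_dvd by blast
  qed
  then have "u dvd 1" using padic_unit[OF p] padic_residue_eq_0_iff_dvd by blast
  then obtain v where "1 = u * v" by (rule dvdE)
  then have "padic_p ^ k = a * v" using u by (simp add: mult.assoc)
  then have "a dvd b" if "b \<in> A" for b
    using all_div[OF that] by (metis dvd_trans dvd_triv_left)
  then show ?thesis using a(1) by blast
qed

lemma smul_apply: "smul r f t = r * f t"
  by (simp add: smul_def)

lemma smul_add: "smul r (f + g) = smul r f + smul (r::'r::comm_ring_1) g"
  by (rule ext) (simp add: smul_apply distrib_left)

lemma smul_diff: "smul r (f - g) = smul r f - smul (r::'r::comm_ring_1) g"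
  by (rule ext) (simp add: smul_apply right_diff_distrib)

lemma smul_smul: "smul a (smul b f) = smul (a * b) (f :: 'a \<Rightarrow> 'r::comm_ring_1)"
  by (rule ext) (simp add: smul_apply mult.assoc)

lemma smul_one [simp]: "smul 1 (f :: 'a \<Rightarrow> 'r::comm_ring_1) = f"
  by (rule ext) (simp add: smul_apply)

lemma smul_zero [simp]: "smul r (0 :: 'a \<Rightarrow> 'r::comm_ring_1) = 0"
  by (rule ext) (simp add: smul_apply)

lemma smul_zero_left [simp]: "smul 0 (f :: 'a \<Rightarrow> 'r::comm_ring_1) = 0"
  by (rule ext) (simp add: smul_apply)

lemma smul_add_left: "smul (a + b) (f :: 'a \<Rightarrow> 'r::comm_ring_1) = smul a f + smul b f"
  by (rule ext) (simp add: smul_apply distrib_right)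

definition is_submodule :: "('a \<Rightarrow> 'r::comm_ring_1) set \<Rightarrow> bool" where
  "is_submodule W \<longleftrightarrow> 0 \<in> W \<and> (\<forall>x\<in>W. \<forall>y\<in>W. x + y \<in> W) \<and> (\<forall>r. \<forall>x\<in>W. smul r x \<in> W)"

lemma submodule_zero: "is_submodule W \<Longrightarrow> 0 \<in> W"
  by (simp add: is_submodule_def)

lemma submodule_add: "is_submodule W \<Longrightarrow> x \<in> W \<Longrightarrow> y \<in> W \<Longrightarrow> x + y \<in> W"
  by (simp add: is_submodule_def)

lemma submodule_smul: "is_submodule W \<Longrightarrow> x \<in> W \<Longrightarrow> smul r x \<in> W"
  by (simp add: is_submodule_def)

lemma submodule_uminus:
  assumes "is_submodule W" and "x \<in> W"
  shows "- x \<in> W"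
proof -
  have "smul (-1) x = - x" by (rule ext) (simp add: smul_apply)
  then show ?thesis using submodule_smul[OF assms, of "-1"] by simp
qed

lemma submodule_diff: "is_submodule W \<Longrightarrow> x \<in> W \<Longrightarrow> y \<in> W \<Longrightarrow> x - y \<in> W"
  using submodule_add[of W x "- y"] submodule_uminus[of W y] by simp

lemma submodule_sum: "is_submodule W \<Longrightarrow> (\<And>i. i \<in> S \<Longrightarrow> f i \<in> W) \<Longrightarrow> sum f S \<in> W"
  by (induction S rule: infinite_finite_induct) (auto intro: submodule_zero submodule_add)

lemma submodule_rspan: "is_submodule (rspan S)"
  by (simp add: is_submodule_def rspan.intros)

lemma rspan_subset:
  assumes W: "is_submodule W" and S: "S \<subseteq> W"
  shows "rspan S \<subseteq> W"
proof
  fix x assume "x \<in> rspan S"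
  then show "x \<in> W"
  proof (induction rule: rspan.induct)
    case span_zero then show ?case using submodule_zero[OF W] by (simp add: zero_fun_def)
  next
    case (span_base x) then show ?case using S by blast
  next
    case (span_add x y) then show ?case using submodule_add[OF W] by (simp add: plus_fun_def)
  next
    case (span_smul x r) then show ?case using submodule_smul[OF W] by simp
  qed
qed

lemma ssum_mem: "a \<in> A \<Longrightarrow> b \<in> B \<Longrightarrow> a + b \<in> ssum A B"
  unfolding ssum_def by blast

lemma submodule_ssum:
  assumes A: "is_submodule A" and B: "is_submodule B"
  shows "is_submodule (ssum A B)"
  unfolding is_submodule_def
proof (intro conjI ballI allI)
  show "0 \<in> ssum A B" using ssum_mem[OF submodule_zero[OF A] submodule_zero[OF B]] by simp
next
  fix x y assume "x \<in> ssum A B" "y \<in> ssum A B"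
  then obtain a b a' b' where "x = a + b" "y = a' + b'" "a \<in> A" "b \<in> B" "a' \<in> A" "b' \<in> B"
    unfolding ssum_def by blast
  moreover have "x + y = (a + a') + (b + b')" if "x = a + b" "y = a' + b'"
    using that by (simp add: ac_simps)
  ultimately show "x + y \<in> ssum A B" by (metis A B ssum_mem submodule_add)
next
  fix r x assume "x \<in> ssum A B"
  then obtain a b where "x = a + b" "a \<in> A" "b \<in> B" unfolding ssum_def by blast
  then show "smul r x \<in> ssum A B" by (metis A B smul_add ssum_mem submodule_smul)
qed

lemma ssum_subset: "is_submodule W \<Longrightarrow> A \<subseteq> W \<Longrightarrow> B \<subseteq> W \<Longrightarrow> ssum A B \<subseteq> W"
  unfolding ssum_def by (auto intro: submodule_add)

lemma submodule_image_smul: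
  assumes W: "is_submodule W"
  shows "is_submodule (smul c ` W)"
  unfolding is_submodule_def
proof (intro conjI ballI allI)
  show "0 \<in> smul c ` W" using submodule_zero[OF W] by (metis image_eqI smul_zero)
next
  fix x y assume "x \<in> smul c ` W" "y \<in> smul c ` W"
  then obtain a b where "x = smul c a" "y = smul c b" "a \<in> W" "b \<in> W" by blast
  then show "x + y \<in> smul c ` W" using submodule_add[OF W] by (metis image_eqI smul_add)
next
  fix r x assume "x \<in> smul c ` W"
  then obtain a where "x = smul c a" "a \<in> W" by blast
  then show "smul r x \<in> smul c ` W"
    using submodule_smul[OF W] by (metis image_eqI smul_smul mult.commute)
qed

section \<open>The magma algebra and the lower central series of the free Lie algebra\<close>

lemma submodule_magma_alg: "is_submodule (magma_alg X :: ('x ltree \<Rightarrow> 'r::comm_ring_1) set)"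
  unfolding is_submodule_def
proof (intro conjI ballI allI)
  show "0 \<in> (magma_alg X :: ('x ltree \<Rightarrow> 'r) set)" by (simp add: magma_alg_def)
next
  fix x y :: "'x ltree \<Rightarrow> 'r" assume x: "x \<in> magma_alg X" and y: "y \<in> magma_alg X"
  have "{t. (x + y) t \<noteq> 0} \<subseteq> {t. x t \<noteq> 0} \<union> {t. y t \<noteq> 0}" by auto
  then show "x + y \<in> magma_alg X"
    using x y unfolding magma_alg_def by (auto intro: finite_subset)
next
  fix r and x :: "'x ltree \<Rightarrow> 'r" assume x: "x \<in> magma_alg X"
  have "{t. smul r x t \<noteq> 0} \<subseteq> {t. x t \<noteq> 0}" by (auto simp: smul_apply)
  then show "smul r x \<in> magma_alg X"
    using x unfolding magma_alg_def by (auto intro: finite_subset simp: smul_apply)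
qed

lemma br_add_left: "br (f + g) h = br f h + br g (h :: 'x ltree \<Rightarrow> 'r::comm_ring_1)"
  by (rule ext, simp add: br_def distrib_right split: ltree.split)

lemma br_add_right: "br h (f + g) = br h f + br h (g :: 'x ltree \<Rightarrow> 'r::comm_ring_1)"
  by (rule ext, simp add: br_def distrib_left split: ltree.split)

lemma br_zero_right: "br h (0 :: 'x ltree \<Rightarrow> 'r::comm_ring_1) = 0"
  by (rule ext, simp add: br_def split: ltree.split)

lemma br_smul_right: "br h (smul r f) = smul r (br h (f :: 'x ltree \<Rightarrow> 'r::comm_ring_1))"
  by (rule ext, simp add: br_def smul_apply ac_simps split: ltree.split)

lemma br_magma_alg:
  assumes x: "x \<in> magma_alg X" and y: "y \<in> magma_alg X"
  shows "br x y \<in> (magma_alg X :: ('x ltree \<Rightarrow> 'r::comm_ring_1) set)"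
proof -
  have "{t. br x y t \<noteq> 0} \<subseteq> (\<lambda>(s, u). Node s u) ` ({t. x t \<noteq> 0} \<times> {t. y t \<noteq> 0})"
  proof
    fix t assume "t \<in> {t. br x y t \<noteq> 0}"
    then obtain s u where "t = Node s u" "x s \<noteq> 0" "y u \<noteq> 0" by (cases t) (auto simp: br_def dest: mult_not_zero)
    then show "t \<in> (\<lambda>(s, u). Node s u) ` ({t. x t \<noteq> 0} \<times> {t. y t \<noteq> 0})" by force
  qed
  moreover have "finite ({t. x t \<noteq> 0} \<times> {t. y t \<noteq> 0})"
    using x y by (auto simp: magma_alg_def)
  ultimately have "finite {t. br x y t \<noteq> 0}" by (auto intro: finite_subset)
  moreover have "set_ltree t \<subseteq> X" if "br x y t \<noteq> 0" for t
    using that x y by (cases t) (auto simp: br_def magma_alg_def dest: mult_not_zero)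
  ultimately show ?thesis unfolding magma_alg_def by blast
qed

lemma brs_subset: "is_submodule W \<Longrightarrow> (\<And>a b. a \<in> A \<Longrightarrow> b \<in> B \<Longrightarrow> br a b \<in> W) \<Longrightarrow> brs A B \<subseteq> W"
  unfolding brs_def by (rule rspan_subset) auto

lemma submodule_brs: "is_submodule (brs A B)"
  unfolding brs_def by (rule submodule_rspan)

lemma br_mem_brs: "a \<in> A \<Longrightarrow> b \<in> B \<Longrightarrow> br a b \<in> brs A B"
  unfolding brs_def by (rule rspan.span_base) blast

lemma submodule_br_right_preimage:
  assumes "is_submodule N"
  shows "is_submodule {w. br (x :: 'x ltree \<Rightarrow> 'r::comm_ring_1) w \<in> N}"
  using assms unfolding is_submodule_def
  by (simp add: br_add_right br_smul_right br_zero_right)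

lemma submodule_magma_ideal_gen: "is_submodule (magma_ideal_gen X S)"
  by (simp add: is_submodule_def magma_ideal_gen.intros)

lemma magma_ideal_gen_subset:
  assumes "S \<subseteq> magma_alg X"
  shows "magma_ideal_gen X S \<subseteq> (magma_alg X :: ('x ltree \<Rightarrow> 'r::comm_ring_1) set)"
proof
  fix x :: "'x ltree \<Rightarrow> 'r" assume "x \<in> magma_ideal_gen X S"
  then show "x \<in> magma_alg X"
  proof (induction rule: magma_ideal_gen.induct)
    case mig_zero then show ?case using submodule_zero[OF submodule_magma_alg] by (simp add: zero_fun_def)
  next
    case (mig_add x y)
    then show ?case using submodule_add[OF submodule_magma_alg] by (simp add: plus_fun_def)
  qed (use assms in \<open>auto intro: br_magma_alg submodule_smul[OF submodule_magma_alg]\<close>)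
qed

lemma submodule_lie_rel: "is_submodule (lie_rel X)"
  unfolding lie_rel_def by (rule submodule_magma_ideal_gen)

lemma lie_rel_subset: "lie_rel X \<subseteq> (magma_alg X :: ('x ltree \<Rightarrow> 'r::comm_ring_1) set)"
  unfolding lie_rel_def
  by (rule magma_ideal_gen_subset)
    (auto intro!: br_magma_alg submodule_add[OF submodule_magma_alg])

lemma lie_rel_br_left: "x \<in> lie_rel X \<Longrightarrow> y \<in> magma_alg X \<Longrightarrow> br y x \<in> lie_rel X"
  unfolding lie_rel_def by (rule mig_left)

lemma lie_rel_anticomm:
  assumes a: "a \<in> magma_alg X" and b: "b \<in> magma_alg X"
  shows "br a b + br b a \<in> (lie_rel X :: ('x ltree \<Rightarrow> 'r::comm_ring_1) set)"
proof -
  have sq: "br c c \<in> (lie_rel X :: ('x ltree \<Rightarrow> 'r) set)" if "c \<in> magma_alg X" for c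
    unfolding lie_rel_def using that by (intro mig_base) blast
  have "br a b + br b a = br (a + b) (a + b) - br a a - br b b"
    by (simp add: br_add_left br_add_right algebra_simps)
  then show ?thesis
    using sq[OF submodule_add[OF submodule_magma_alg a b]] sq[OF a] sq[OF b]
    by (metis submodule_lie_rel submodule_diff)
qed

lemma lie_rel_jacobi:
  assumes x: "x \<in> magma_alg X" and b: "b \<in> magma_alg X" and z: "z \<in> magma_alg X"
  shows "br x (br b z) - br (br x b) z - br (br z x) b \<in> (lie_rel X :: ('x ltree \<Rightarrow> 'r::comm_ring_1) set)"
proof -
  have "br (br x b) z + br (br b z) x + br (br z x) b \<in> (lie_rel X :: ('x ltree \<Rightarrow> 'r) set)"
    unfolding lie_rel_def using x b z by (intro mig_base) blast
  moreover have "br x (br b z) + br (br b z) x \<in> (lie_rel X :: ('x ltree \<Rightarrow> 'r) set)"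
    using lie_rel_anticomm[OF x br_magma_alg[OF b z]] .
  ultimately show ?thesis using submodule_diff[OF submodule_lie_rel] by (fastforce simp: algebra_simps)
qed

lemma submodule_free_lcs: "is_submodule (free_lcs X i :: ('x ltree \<Rightarrow> 'r::comm_ring_1) set)"
  by (cases i) (auto intro: submodule_ssum submodule_brs submodule_lie_rel submodule_magma_alg)

lemma free_lcs_subset: "free_lcs X i \<subseteq> (magma_alg X :: ('x ltree \<Rightarrow> 'r::comm_ring_1) set)"
proof (induction i)
  case (Suc i)
  then have "brs (free_lcs X i) (magma_alg X) \<subseteq> (magma_alg X :: ('x ltree \<Rightarrow> 'r) set)"
    by (intro brs_subset submodule_magma_alg) (auto intro: br_magma_alg)
  then show ?case by (simp add: ssum_subset submodule_magma_alg lie_rel_subset)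
qed simp

lemma lie_rel_subset_free_lcs: "lie_rel X \<subseteq> (free_lcs X i :: ('x ltree \<Rightarrow> 'r::comm_ring_1) set)"
proof (cases i)
  case (Suc j)
  have "0 + y \<in> ssum (brs (free_lcs X j) (magma_alg X)) (lie_rel X)" if "y \<in> lie_rel X" for y
    using that by (intro ssum_mem submodule_zero[OF submodule_brs])
  then show ?thesis using Suc by auto
qed (simp add: lie_rel_subset)

lemma free_lcs_Suc_subset: "free_lcs X (Suc i) \<subseteq> (free_lcs X i :: ('x ltree \<Rightarrow> 'r::comm_ring_1) set)"
proof (induction i)
  case 0 then show ?case using free_lcs_subset[of X 1] by simp
next
  case (Suc i)
  then have "brs (free_lcs X (Suc i)) (magma_alg X) \<subseteq> (brs (free_lcs X i) (magma_alg X) :: ('x ltree \<Rightarrow> 'r) set)"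
    by (intro brs_subset submodule_brs) (auto intro: br_mem_brs)
  then show ?case by (simp add: ssum_def) blast
qed

lemma free_lcs_antimono: "i \<le> j \<Longrightarrow> free_lcs X j \<subseteq> (free_lcs X i :: ('x ltree \<Rightarrow> 'r::comm_ring_1) set)"
  by (induction j) (use free_lcs_Suc_subset in \<open>auto simp: le_Suc_eq\<close>)

lemma br_free_lcs_right:
  "x \<in> free_lcs X i \<Longrightarrow> y \<in> magma_alg X \<Longrightarrow>
    br x y \<in> (free_lcs X (Suc i) :: ('x ltree \<Rightarrow> 'r::comm_ring_1) set)"
  using ssum_mem[OF br_mem_brs submodule_zero[OF submodule_lie_rel]] by fastforce

lemma br_free_lcs_left:
  assumes x: "x \<in> free_lcs X i" and y: "y \<in> magma_alg X"
  shows "br y x \<in> (free_lcs X (Suc i) :: ('x ltree \<Rightarrow> 'r::comm_ring_1) set)"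
proof -
  have "br y x + br x y \<in> (free_lcs X (Suc i) :: ('x ltree \<Rightarrow> 'r) set)"
    using lie_rel_anticomm[OF y] x free_lcs_subset lie_rel_subset_free_lcs by blast
  then show ?thesis
    using submodule_diff[OF submodule_free_lcs _ br_free_lcs_right[OF x y]] by fastforce
qed

lemma br_free_lcs:
  "x \<in> free_lcs X i \<Longrightarrow> y \<in> free_lcs X j \<Longrightarrow>
   br x y \<in> (free_lcs X (i + j + 1) :: ('x ltree \<Rightarrow> 'r::comm_ring_1) set)"
proof (induction j arbitrary: i x y)
  case 0 then show ?case using br_free_lcs_right by simp
next
  case (Suc j)
  let ?N = "free_lcs X (i + Suc j + 1) :: ('x ltree \<Rightarrow> 'r) set"
  have x: "x \<in> magma_alg X" using Suc.prems(1) free_lcs_subset by blast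
  have "br x w \<in> ?N" if gen: "w \<in> {br b z |b z. b \<in> free_lcs X j \<and> z \<in> magma_alg X}" for w
  proof -
    obtain b z where w: "w = br b z" and b: "b \<in> free_lcs X j" and z: "z \<in> magma_alg X"
      using gen by blast
    have "br (br x b) z \<in> ?N" using br_free_lcs_right[OF Suc.IH[OF Suc.prems(1) b] z] by simp
    moreover have "br (br z x) b \<in> ?N"
      using Suc.IH[OF br_free_lcs_left[OF Suc.prems(1) z] b] by simp
    moreover have "br x (br b z) - br (br x b) z - br (br z x) b \<in> ?N"
      using lie_rel_jacobi[OF x _ z] b free_lcs_subset lie_rel_subset_free_lcs by blast
    ultimately show ?thesis unfolding w
      by (metis diff_add_cancel submodule_add submodule_free_lcs)
  qed
  then have brs: "brs (free_lcs X j) (magma_alg X) \<subseteq> {w. br x w \<in> ?N}"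
    unfolding brs_def by (intro rspan_subset submodule_br_right_preimage submodule_free_lcs) blast
  obtain y1 l where y: "y = y1 + l" and y1: "y1 \<in> brs (free_lcs X j) (magma_alg X)"
    and l: "l \<in> lie_rel X"
    using Suc.prems(2) unfolding free_lcs.simps ssum_def by blast
  have "br x y1 \<in> ?N" using brs y1 by blast
  moreover have "br x l \<in> ?N" using lie_rel_br_left[OF l x] lie_rel_subset_free_lcs by blast
  ultimately show ?case unfolding y br_add_right by (rule submodule_add[OF submodule_free_lcs])
qed

subsection \<open>Trees with at most c leaves span L_c(X)\<close>

definition tree_indicator :: "'x ltree \<Rightarrow> ('x ltree \<Rightarrow> 'r::comm_ring_1)" where
  "tree_indicator t = (\<lambda>s. if s = t then 1 else 0)"

fun num_leaves :: "'x ltree \<Rightarrow> nat" where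
  "num_leaves (Leaf x) = 1"
| "num_leaves (Node s u) = num_leaves s + num_leaves u"

definition trees_upto :: "'x set \<Rightarrow> nat \<Rightarrow> 'x ltree set" where
  "trees_upto X n = {t. set_ltree t \<subseteq> X \<and> num_leaves t \<le> n}"

fun num_trees_bound :: "nat \<Rightarrow> nat \<Rightarrow> nat" where
  "num_trees_bound d 0 = 0"
| "num_trees_bound d (Suc n) = d + num_trees_bound d n * num_trees_bound d n"

lemma num_leaves_pos: "0 < num_leaves t"
  by (induction t) auto

lemma tree_indicator_magma_alg:
  "set_ltree t \<subseteq> X \<Longrightarrow> (tree_indicator t :: 'x ltree \<Rightarrow> 'r::comm_ring_1) \<in> magma_alg X"
  unfolding magma_alg_def tree_indicator_def by (auto intro: finite_subset[of _ "{t}"])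

lemma tree_indicator_free_lcs:
  "set_ltree t \<subseteq> X \<Longrightarrow> (tree_indicator t :: 'x ltree \<Rightarrow> 'r::comm_ring_1) \<in> free_lcs X (num_leaves t - 1)"
proof (induction t)
  case (Leaf x) then show ?case by (simp add: tree_indicator_magma_alg)
next
  case (Node s u)
  then have "br (tree_indicator s) (tree_indicator u)
      \<in> (free_lcs X (num_leaves s - 1 + (num_leaves u - 1) + 1) :: ('x ltree \<Rightarrow> 'r) set)"
    by (intro br_free_lcs) auto
  moreover have "br (tree_indicator s) (tree_indicator u) = (tree_indicator (Node s u) :: 'x ltree \<Rightarrow> 'r)"
    by (rule ext) (simp add: br_def tree_indicator_def split: ltree.split)
  moreover have "num_leaves s - 1 + (num_leaves u - 1) + 1 = num_leaves (Node s u) - 1"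
    using num_leaves_pos[of s] num_leaves_pos[of u] by simp
  ultimately show ?case by (simp only:)
qed

lemma finite_card_trees_upto:
  assumes "finite X"
  shows "finite (trees_upto X n) \<and> card (trees_upto X n) \<le> num_trees_bound (card X) n"
proof (induction n)
  case 0
  have "trees_upto X 0 = {}"
    by (auto simp: trees_upto_def num_leaves_pos)
  then show ?case by simp
next
  case (Suc n)
  let ?T = "trees_upto X n"
  let ?U = "Leaf ` X \<union> (\<lambda>(s, u). Node s u) ` (?T \<times> ?T)"
  have sub: "trees_upto X (Suc n) \<subseteq> ?U"
  proof
    fix t assume t: "t \<in> trees_upto X (Suc n)"
    show "t \<in> ?U"
    proof (cases t)
      case (Leaf x) then show ?thesis using t by (auto simp: trees_upto_def)
    next
      case (Node s u)
      then have "(s, u) \<in> ?T \<times> ?T"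
        using t num_leaves_pos[of s] num_leaves_pos[of u] by (auto simp: trees_upto_def)
      then show ?thesis using Node by force
    qed
  qed
  have fin: "finite ?U" using Suc assms by simp
  have "card ?U \<le> card (Leaf ` X) + card ((\<lambda>(s, u). Node s u) ` (?T \<times> ?T))"
    by (rule card_Un_le)
  also have "\<dots> \<le> card X + card (?T \<times> ?T)"
    by (intro add_mono card_image_le) (use Suc assms in auto)
  also have "\<dots> = card X + card ?T * card ?T" by (simp add: card_cartesian_product)
  also have "\<dots> \<le> num_trees_bound (card X) (Suc n)"
    using Suc by (simp add: mult_mono)
  finally show ?case using card_mono[OF fin sub] finite_subset[OF sub fin] by simp
qed

lemma sum_fun_apply: "(sum f A) u = sum (\<lambda>i. f i u) A"
  by (induction A rule: infinite_finite_induct) auto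

lemma magma_alg_decomp:
  assumes X: "finite X" and x: "x \<in> (magma_alg X :: ('x ltree \<Rightarrow> 'r::comm_ring_1) set)"
  shows "x - (\<Sum>t\<in>trees_upto X c. smul (x t) (tree_indicator t)) \<in> free_lcs X c"
proof -
  define S where "S = {t. x t \<noteq> 0}"
  have fS: "finite S" and SX: "\<And>t. t \<in> S \<Longrightarrow> set_ltree t \<subseteq> X"
    using x unfolding S_def magma_alg_def by auto
  have sum_apply: "(\<Sum>t\<in>A. smul (x t) (tree_indicator t)) u = (if u \<in> A then x u else 0)"
    if "finite A" for A u
  proof -
    have "(\<Sum>t\<in>A. smul (x t) (tree_indicator t)) u = (\<Sum>t\<in>A. if u = t then x t else 0)"
      unfolding sum_fun_apply by (intro sum.cong) (auto simp: smul_apply tree_indicator_def)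
    then show ?thesis using that by (simp add: sum.delta)
  qed
  have "x - (\<Sum>t\<in>trees_upto X c. smul (x t) (tree_indicator t))
      = (\<Sum>t\<in>S - trees_upto X c. smul (x t) (tree_indicator t))"
    by (rule ext) (use fS finite_card_trees_upto[OF X] in \<open>simp add: sum_apply S_def\<close>)
  also have "\<dots> \<in> free_lcs X c"
  proof (rule submodule_sum[OF submodule_free_lcs])
    fix t assume "t \<in> S - trees_upto X c"
    then have "set_ltree t \<subseteq> X" and "c \<le> num_leaves t - 1" using SX by (auto simp: trees_upto_def)
    then have "(tree_indicator t :: 'x ltree \<Rightarrow> 'r) \<in> free_lcs X c"
      using tree_indicator_free_lcs free_lcs_antimono by blast
    then show "smul (x t) (tree_indicator t) \<in> free_lcs X c" by (rule submodule_smul[OF submodule_free_lcs])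
  qed
  finally show ?thesis .
qed

text \<open>Pointwise evaluation of sums of functions only obstructs the reasoning about
  linear combinations below.\<close>

declare plus_fun_apply [simp del] zero_fun_apply [simp del]

definition lincomb :: "'r::comm_ring_1 list \<Rightarrow> ('a \<Rightarrow> 'r) list \<Rightarrow> ('a \<Rightarrow> 'r)" where
  "lincomb as gs = sum_list (map (\<lambda>(a, g). smul a g) (zip as gs))"

definition span_modulo :: "('a \<Rightarrow> 'r::comm_ring_1) set \<Rightarrow> ('a \<Rightarrow> 'r) list \<Rightarrow> ('a \<Rightarrow> 'r) set" where
  "span_modulo K gs = {x. \<exists>as. length as = length gs \<and> x - lincomb as gs \<in> K}"

lemma lincomb_Nil [simp]: "lincomb as [] = 0"
  by (simp add: lincomb_def)

lemma lincomb_Cons [simp]: "lincomb (a # as) (g # gs) = smul a g + lincomb as gs"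
  by (simp add: lincomb_def)

lemma lincomb_add:
  "length as = length gs \<Longrightarrow> length bs = length gs \<Longrightarrow>
   lincomb as gs + lincomb bs gs = lincomb (map2 (+) as bs) (gs :: ('a \<Rightarrow> 'r::comm_ring_1) list)"
proof (induction gs arbitrary: as bs)
  case (Cons g gs)
  then obtain a as' b bs' where "as = a # as'" "bs = b # bs'" "length as' = length gs" "length bs' = length gs"
    by (metis length_Suc_conv)
  then show ?case using Cons.IH by (simp add: smul_add_left algebra_simps)
qed simp

lemma lincomb_smul:
  "smul r (lincomb as gs) = lincomb (map ((*) r) as) (gs :: ('a \<Rightarrow> 'r::comm_ring_1) list)"
proof (induction gs arbitrary: as)
  case (Cons g gs) then show ?case by (cases as) (simp_all add: smul_add smul_smul lincomb_def)
qed simp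

lemma lincomb_replicate_0: "lincomb (replicate n 0) (gs :: ('a \<Rightarrow> 'r::comm_ring_1) list) = 0"
proof (induction gs arbitrary: n)
  case (Cons g gs) then show ?case by (cases n) (simp_all add: lincomb_def)
qed simp

lemma lincomb_mem: "is_submodule W \<Longrightarrow> set gs \<subseteq> W \<Longrightarrow> lincomb as gs \<in> W"
proof (induction gs arbitrary: as)
  case Nil then show ?case by (simp add: submodule_zero)
next
  case (Cons g gs) then show ?case
    by (cases as) (simp_all add: lincomb_def submodule_zero submodule_add submodule_smul)
qed

lemma lincomb_map_map: "lincomb (map f l) (map g l) = sum_list (map (\<lambda>t. smul (f t) (g t)) l)"
  by (induction l) simp_all

lemma submodule_span_modulo:
  assumes K: "is_submodule K"
  shows "is_submodule (span_modulo K gs)"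
  unfolding is_submodule_def
proof (intro conjI ballI allI)
  show "0 \<in> span_modulo K gs" unfolding span_modulo_def
    using submodule_zero[OF K] by (intro CollectI exI[of _ "replicate (length gs) 0"]) (simp add: lincomb_replicate_0)
next
  fix x y assume "x \<in> span_modulo K gs" "y \<in> span_modulo K gs"
  then obtain as bs where a: "length as = length gs" "x - lincomb as gs \<in> K"
    and b: "length bs = length gs" "y - lincomb bs gs \<in> K" unfolding span_modulo_def by blast
  have eq: "(x + y) - lincomb (map2 (+) as bs) gs = (x - lincomb as gs) + (y - lincomb bs gs)"
    using lincomb_add[OF a(1) b(1)] by (simp add: algebra_simps)
  have "(x + y) - lincomb (map2 (+) as bs) gs \<in> K" unfolding eq by (rule submodule_add[OF K a(2) b(2)])
  then show "x + y \<in> span_modulo K gs" unfolding span_modulo_def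
    using a(1) b(1) by (intro CollectI exI[of _ "map2 (+) as bs"]) simp
next
  fix r x assume "x \<in> span_modulo K gs"
  then obtain as where a: "length as = length gs" "x - lincomb as gs \<in> K"
    unfolding span_modulo_def by blast
  have "smul r x - lincomb (map ((*) r) as) gs = smul r (x - lincomb as gs)"
    by (simp add: smul_diff lincomb_smul)
  then have "smul r x - lincomb (map ((*) r) as) gs \<in> K" using submodule_smul[OF K a(2)] by simp
  then show "smul r x \<in> span_modulo K gs" unfolding span_modulo_def
    using a(1) by (intro CollectI exI[of _ "map ((*) r) as"]) simp
qed

lemma subset_span_modulo: "K \<subseteq> span_modulo K gs"
  unfolding span_modulo_def by (auto intro!: exI[of _ "replicate (length gs) 0"] simp: lincomb_replicate_0)

lemma span_modulo_Cons: "x \<in> span_modulo K (g # gs) \<Longrightarrow> \<exists>a. x - smul a g \<in> span_modulo K gs"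
proof -
  assume "x \<in> span_modulo K (g # gs)"
  then obtain a as where "length as = length gs" "x - (smul a g + lincomb as gs) \<in> K"
    unfolding span_modulo_def by (auto simp: length_Suc_conv)
  then have "x - smul a g - lincomb as gs \<in> K" "length as = length gs" by (simp_all add: algebra_simps)
  then show ?thesis unfolding span_modulo_def by blast
qed

text \<open>Induction on the generators: the coefficients of g in elements of J form an ideal of the
  p-adic integers, whose generator provides the new first generator.\<close>

lemma span_modulo_generators:
  fixes gs :: "('a \<Rightarrow> 'p::card2 padic_int) list"
  assumes p: "prime CARD('p)" and K: "is_submodule K"
  shows "is_submodule J \<Longrightarrow> K \<subseteq> J \<Longrightarrow> J \<subseteq> span_modulo K gs \<Longrightarrow>
    \<exists>ys. length ys = length gs \<and> set ys \<subseteq> J \<and> J \<subseteq> span_modulo K ys"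
proof (induction gs arbitrary: J)
  case Nil then show ?case by simp
next
  case (Cons g gs)
  note J = Cons.prems(1)
  have S: "is_submodule (span_modulo K gs)" by (rule submodule_span_modulo[OF K])
  define A where "A = {a. \<exists>x\<in>J. x - smul a g \<in> span_modulo K gs}"
  have zero: "0 \<in> A" unfolding A_def using submodule_zero[OF J] submodule_zero[OF S] by force
  have add: "a + b \<in> A" if ab: "a \<in> A" "b \<in> A" for a b
  proof -
    obtain x y where x: "x \<in> J" "x - smul a g \<in> span_modulo K gs"
      and y: "y \<in> J" "y - smul b g \<in> span_modulo K gs"
      using ab unfolding A_def by blast
    have eq: "(x + y) - smul (a + b) g = (x - smul a g) + (y - smul b g)"
      by (simp add: smul_add_left algebra_simps)
    have "(x + y) - smul (a + b) g \<in> span_modulo K gs" unfolding eq by (rule submodule_add[OF S x(2) y(2)])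
    then show ?thesis using submodule_add[OF J x(1) y(1)] unfolding A_def by blast
  qed
  have mult: "r * a \<in> A" if a: "a \<in> A" for r a
  proof -
    obtain x where x: "x \<in> J" "x - smul a g \<in> span_modulo K gs" using a unfolding A_def by blast
    have "smul r x - smul (r * a) g = smul r (x - smul a g)" by (simp add: smul_diff smul_smul)
    then have "smul r x - smul (r * a) g \<in> span_modulo K gs" using submodule_smul[OF S x(2)] by simp
    then show ?thesis using submodule_smul[OF J x(1)] unfolding A_def by blast
  qed
  obtain a0 where "a0 \<in> A" and a0_dvd: "\<And>a. a \<in> A \<Longrightarrow> a0 dvd a"
    using padic_ideal_principal[OF p zero add mult] by blast
  then obtain x0 where x0: "x0 \<in> J" "x0 - smul a0 g \<in> span_modulo K gs" unfolding A_def by blast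
  define J' where "J' = J \<inter> span_modulo K gs"
  have "is_submodule J'" unfolding J'_def using J S by (auto simp: is_submodule_def)
  moreover have "K \<subseteq> J'" unfolding J'_def using Cons.prems(2) subset_span_modulo by blast
  moreover have "J' \<subseteq> span_modulo K gs" unfolding J'_def by blast
  ultimately obtain ys' where ys': "length ys' = length gs" "set ys' \<subseteq> J'" "J' \<subseteq> span_modulo K ys'"
    using Cons.IH by blast
  have "J \<subseteq> span_modulo K (x0 # ys')"
  proof
    fix x assume x: "x \<in> J"
    then obtain a where a: "x - smul a g \<in> span_modulo K gs" using span_modulo_Cons Cons.prems(3) by blast
    then have "a0 dvd a" using x a0_dvd unfolding A_def by blast
    then obtain l where l: "a = a0 * l" by (rule dvdE)
    define z where "z = x - smul l x0"
    have "z \<in> J" unfolding z_def by (rule submodule_diff[OF J x submodule_smul[OF J x0(1)]])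
    moreover have "z = (x - smul a g) - smul l (x0 - smul a0 g)"
      unfolding z_def l by (simp add: smul_diff smul_smul mult.commute)
    then have "z \<in> span_modulo K gs" using submodule_diff[OF S a submodule_smul[OF S x0(2)]] by simp
    ultimately have "z \<in> J'" unfolding J'_def by blast
    then obtain bs where bs: "length bs = length ys'" "z - lincomb bs ys' \<in> K"
      using ys'(3) unfolding span_modulo_def by blast
    have eq: "x - lincomb (l # bs) (x0 # ys') = z - lincomb bs ys'" by (simp add: z_def algebra_simps)
    have "x - lincomb (l # bs) (x0 # ys') \<in> K" unfolding eq by (rule bs(2))
    then show "x \<in> span_modulo K (x0 # ys')" unfolding span_modulo_def
      using bs(1) by (intro CollectI exI[of _ "l # bs"]) simp
  qed
  moreover have "set (x0 # ys') \<subseteq> J" using ys'(2) x0(1) unfolding J'_def by auto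
  ultimately show ?case using ys'(1) by (intro exI[of _ "x0 # ys'"]) simp
qed

definition coeff_residues :: "nat \<Rightarrow> ('a \<Rightarrow> 'p::card2 padic_int) set \<Rightarrow> ('a \<Rightarrow> 'p padic_int) list
    \<Rightarrow> ('a \<Rightarrow> 'p padic_int) \<Rightarrow> int list" where
  "coeff_residues e K ys x =
     map (\<lambda>a. padic_residue a e) (SOME as. length as = length ys \<and> x - lincomb as ys \<in> K)"

definition residue_vectors :: "int \<Rightarrow> nat \<Rightarrow> nat \<Rightarrow> int list set" where
  "residue_vectors P e r = {l. set l \<subseteq> {0..<P ^ e} \<and> length l = r}"

lemma finite_residue_vectors: "finite (residue_vectors P e r)"
  unfolding residue_vectors_def by (rule finite_lists_length_eq) simp

lemma card_residue_vectors: "P \<ge> 0 \<Longrightarrow> card (residue_vectors P e r) = nat (P ^ e) ^ r"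
  unfolding residue_vectors_def by (subst card_lists_length_eq) simp_all

lemma coeff_residues_mem:
  assumes "x \<in> span_modulo K ys"
  shows "coeff_residues e K ys (x :: 'a \<Rightarrow> 'p::card2 padic_int) \<in> residue_vectors (int CARD('p)) e (length ys)"
proof -
  have "\<exists>as. length as = length ys \<and> x - lincomb as ys \<in> K" using assms unfolding span_modulo_def by blast
  then have "length (SOME as. length as = length ys \<and> x - lincomb as ys \<in> K) = length ys"
    by (rule someI2_ex) blast
  then show ?thesis unfolding coeff_residues_def residue_vectors_def by (auto simp: padic_residue_bounds)
qed

lemma lincomb_diff_residues_eq:
  fixes as bs :: "'p::card2 padic_int list"
  assumes "length as = length ys" "length bs = length ys"
    and "map (\<lambda>a. padic_residue a e) as = map (\<lambda>a. padic_residue a e) bs"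
  shows "\<exists>cs. lincomb as ys - lincomb bs ys = smul (padic_p ^ e) (lincomb cs ys)"
  using assms
proof (induction ys arbitrary: as bs)
  case (Cons y ys)
  obtain a as' b bs' where ab: "as = a # as'" "bs = b # bs'" "length as' = length ys" "length bs' = length ys"
    using Cons.prems(1,2) by (metis length_Suc_conv)
  with Cons.prems(3) have "padic_residue (a - b) e = 0"
    and "map (\<lambda>a. padic_residue a e) as' = map (\<lambda>a. padic_residue a e) bs'"
    by (auto simp: padic_residue_diff)
  then obtain cs where cs: "lincomb as' ys - lincomb bs' ys = smul (padic_p ^ e) (lincomb cs ys)"
    and "padic_p ^ e dvd a - b"
    using Cons.IH[OF ab(3,4)] padic_residue_eq_0_iff_dvd by blast
  from \<open>padic_p ^ e dvd a - b\<close> obtain c where c: "a - b = padic_p ^ e * c" by (rule dvdE)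
  have "lincomb as (y # ys) - lincomb bs (y # ys) = smul (a - b) y + (lincomb as' ys - lincomb bs' ys)"
    unfolding ab by (rule ext) (simp add: smul_apply plus_fun_apply algebra_simps)
  also have "\<dots> = smul (padic_p ^ e) (lincomb (c # cs) (y # ys))"
    unfolding c cs by (simp add: smul_add smul_smul)
  finally show ?case by blast
qed simp

lemma coeff_residues_eq:
  assumes K: "is_submodule K" and x: "x \<in> span_modulo K ys" and y: "y \<in> span_modulo K ys"
    and e: "coeff_residues e K ys x = coeff_residues e K ys (y :: 'a \<Rightarrow> 'p::card2 padic_int)"
  shows "\<exists>cs. x - y - smul (padic_p ^ e) (lincomb cs ys) \<in> K"
proof -
  define ax where "ax = (SOME as. length as = length ys \<and> x - lincomb as ys \<in> K)"
  define ay where "ay = (SOME as. length as = length ys \<and> y - lincomb as ys \<in> K)"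
  have ax: "length ax = length ys" "x - lincomb ax ys \<in> K"
    using someI_ex[of "\<lambda>as. length as = length ys \<and> x - lincomb as ys \<in> K"] x
    unfolding ax_def span_modulo_def by auto
  have ay: "length ay = length ys" "y - lincomb ay ys \<in> K"
    using someI_ex[of "\<lambda>as. length as = length ys \<and> y - lincomb as ys \<in> K"] y
    unfolding ay_def span_modulo_def by auto
  obtain cs where "lincomb ax ys - lincomb ay ys = smul (padic_p ^ e) (lincomb cs ys)"
    using lincomb_diff_residues_eq[OF ax(1) ay(1)] e unfolding coeff_residues_def ax_def ay_def by blast
  then have eq: "x - y - smul (padic_p ^ e) (lincomb cs ys) = (x - lincomb ax ys) - (y - lincomb ay ys)"
    by (simp add: algebra_simps)
  have "x - y - smul (padic_p ^ e) (lincomb cs ys) \<in> K" unfolding eq by (rule submodule_diff[OF K ax(2) ay(2)])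
  then show ?thesis by blast
qed

section \<open>Fractions with p-power denominators\<close>

text \<open>The kernel of the map from the magma algebra to L_c(X) \<otimes> Q_p is the p-saturation of K.\<close>

definition saturation :: "'r::comm_ring_1 \<Rightarrow> ('a \<Rightarrow> 'r) set \<Rightarrow> ('a \<Rightarrow> 'r) set" where
  "saturation p K = {x. \<exists>t. smul (p ^ t) x \<in> K}"

lemma subset_saturation: "K \<subseteq> saturation p K"
  unfolding saturation_def by (auto intro: exI[of _ 0])

lemma saturation_cancel: "smul (p ^ n) x \<in> saturation p K \<Longrightarrow> x \<in> saturation p K"
  unfolding saturation_def by (auto simp: smul_smul power_add[symmetric])

lemma submodule_saturation:
  assumes K: "is_submodule K"
  shows "is_submodule (saturation p K)"
  unfolding is_submodule_def
proof (intro conjI ballI allI)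
  show "0 \<in> saturation p K" using subset_saturation submodule_zero[OF K] by blast
next
  fix x y assume "x \<in> saturation p K" "y \<in> saturation p K"
  then obtain s t where s: "smul (p ^ s) x \<in> K" and t: "smul (p ^ t) y \<in> K"
    unfolding saturation_def by blast
  have "smul (p ^ (s + t)) (x + y) = smul (p ^ t) (smul (p ^ s) x) + smul (p ^ s) (smul (p ^ t) y)"
    by (simp add: smul_add smul_smul power_add mult.commute)
  then have "smul (p ^ (s + t)) (x + y) \<in> K"
    using submodule_add[OF K submodule_smul[OF K s] submodule_smul[OF K t]] by simp
  then show "x + y \<in> saturation p K" unfolding saturation_def by blast
next
  fix r x assume "x \<in> saturation p K"
  then obtain t where "smul (p ^ t) x \<in> K" unfolding saturation_def by blast
  then have "smul (p ^ t) (smul r x) \<in> K" using submodule_smul[OF K] by (metis smul_smul mult.commute)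
  then show "smul r x \<in> saturation p K" unfolding saturation_def by blast
qed

lemma loc_eq_iff:
  "loc_eq p K v w \<longleftrightarrow> smul (p ^ fst w) (snd v) - smul (p ^ fst v) (snd w) \<in> saturation p K"
  unfolding loc_eq_def saturation_def by simp

locale p_localization =
  fixes p :: "'r::comm_ring_1" and K :: "('x ltree \<Rightarrow> 'r) set"
  assumes submodule_K: "is_submodule K"
begin

abbreviation "Ks \<equiv> saturation p K"

lemma submodule_Ks: "is_submodule Ks"
  by (rule submodule_saturation[OF submodule_K])

lemma loc_eq_refl: "loc_eq p K v v"
  unfolding loc_eq_iff using submodule_zero[OF submodule_Ks] by simp

lemma loc_eq_sym: "loc_eq p K v w \<Longrightarrow> loc_eq p K w v"
  unfolding loc_eq_iff using submodule_uminus[OF submodule_Ks] by fastforce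

lemma loc_eq_trans [trans]:
  assumes uv: "loc_eq p K u v" and vw: "loc_eq p K v w"
  shows "loc_eq p K u w"
proof -
  have "smul (p ^ fst v) (smul (p ^ fst w) (snd u) - smul (p ^ fst u) (snd w))
      = smul (p ^ fst w) (smul (p ^ fst v) (snd u) - smul (p ^ fst u) (snd v))
        + smul (p ^ fst u) (smul (p ^ fst w) (snd v) - smul (p ^ fst v) (snd w))"
    by (rule ext) (simp add: smul_apply plus_fun_apply algebra_simps)
  also have "\<dots> \<in> Ks"
    using uv vw unfolding loc_eq_iff by (intro submodule_add[OF submodule_Ks] submodule_smul[OF submodule_Ks])
  finally show ?thesis unfolding loc_eq_iff by (rule saturation_cancel)
qed

lemma loc_eq_same_denom: "loc_eq p K (e, g) (e, h) \<longleftrightarrow> g - h \<in> Ks"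
  unfolding loc_eq_iff
  using saturation_cancel submodule_smul[OF submodule_Ks] by (metis fst_conv snd_conv smul_diff)

lemma loc_eq_scale: "loc_eq p K (e + j, smul (p ^ j) g) (e, g)"
  unfolding loc_eq_iff using submodule_zero[OF submodule_Ks]
  by (simp add: smul_smul power_add mult.commute)

lemma loc_minus_cong:
  assumes "loc_eq p K v v'" and "loc_eq p K w w'"
  shows "loc_eq p K (loc_minus p v w) (loc_minus p v' w')"
proof -
  have "smul (p ^ fst (loc_minus p v' w')) (snd (loc_minus p v w)) - smul (p ^ fst (loc_minus p v w)) (snd (loc_minus p v' w'))
      = smul (p ^ (fst w + fst w')) (smul (p ^ fst v') (snd v) - smul (p ^ fst v) (snd v'))
        - smul (p ^ (fst v + fst v')) (smul (p ^ fst w') (snd w) - smul (p ^ fst w) (snd w'))"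
    by (rule ext) (simp add: loc_minus_def smul_apply plus_fun_apply power_add algebra_simps)
  also have "\<dots> \<in> Ks"
    using assms unfolding loc_eq_iff
    by (blast intro: submodule_diff[OF submodule_Ks submodule_smul[OF submodule_Ks] submodule_smul[OF submodule_Ks]])
  finally show ?thesis unfolding loc_eq_iff .
qed

lemma loc_plus_cong:
  assumes "loc_eq p K v v'" and "loc_eq p K w w'"
  shows "loc_eq p K (loc_plus p v w) (loc_plus p v' w')"
proof -
  have "smul (p ^ fst (loc_plus p v' w')) (snd (loc_plus p v w)) - smul (p ^ fst (loc_plus p v w)) (snd (loc_plus p v' w'))
      = smul (p ^ (fst w + fst w')) (smul (p ^ fst v') (snd v) - smul (p ^ fst v) (snd v'))
        + smul (p ^ (fst v + fst v')) (smul (p ^ fst w') (snd w) - smul (p ^ fst w) (snd w'))"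
    by (rule ext) (simp add: loc_plus_def smul_apply plus_fun_apply power_add algebra_simps)
  also have "\<dots> \<in> Ks"
    using assms unfolding loc_eq_iff by (intro submodule_add[OF submodule_Ks] submodule_smul[OF submodule_Ks])
  finally show ?thesis unfolding loc_eq_iff .
qed

lemma loc_minus_same_denom: "loc_eq p K (loc_minus p (e, g) (e, h)) (e, g - h)"
  unfolding loc_eq_iff loc_minus_def using submodule_zero[OF submodule_Ks]
  by (simp add: smul_diff smul_smul power_add mult.commute)

lemma loc_plus_same_denom: "loc_eq p K (loc_plus p (e, g) (e, h)) (e, g + h)"
  unfolding loc_eq_iff loc_plus_def using submodule_zero[OF submodule_Ks]
  by (simp add: smul_add smul_smul power_add mult.commute)

lemma frac_set_loc_eq: "v \<in> frac_set p K e W \<Longrightarrow> loc_eq p K w v \<Longrightarrow> w \<in> frac_set p K e W"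
  unfolding frac_set_def by (blast intro: loc_eq_trans)

lemma frac_set_mono: "W \<subseteq> W' \<Longrightarrow> frac_set p K e W \<subseteq> frac_set p K e W'"
  unfolding frac_set_def by blast

lemma frac_set_shift: "frac_set p K e W = frac_set p K (e + j) (smul (p ^ j) ` W)"
proof (intro equalityI subsetI)
  fix v assume "v \<in> frac_set p K e W"
  then obtain g where "g \<in> W" "loc_eq p K v (e, g)" unfolding frac_set_def by blast
  moreover have "loc_eq p K (e, g) (e + j, smul (p ^ j) g)" by (rule loc_eq_sym[OF loc_eq_scale])
  ultimately show "v \<in> frac_set p K (e + j) (smul (p ^ j) ` W)"
    unfolding frac_set_def by (blast intro: loc_eq_trans)
next
  fix v assume "v \<in> frac_set p K (e + j) (smul (p ^ j) ` W)"
  then obtain g where "g \<in> W" "loc_eq p K v (e + j, smul (p ^ j) g)" unfolding frac_set_def by blast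
  then show "v \<in> frac_set p K e W"
    unfolding frac_set_def by (blast intro: loc_eq_trans loc_eq_scale)
qed

lemma loc_sum_frac_set:
  "loc_sum p K (frac_set p K e W1) (frac_set p K e W2) = frac_set p K e (ssum W1 W2)"
proof (intro equalityI subsetI)
  fix v assume "v \<in> loc_sum p K (frac_set p K e W1) (frac_set p K e W2)"
  then obtain a b g1 g2 where g: "g1 \<in> W1" "g2 \<in> W2" and v: "loc_eq p K v (loc_plus p a b)"
    and a: "loc_eq p K a (e, g1)" and b: "loc_eq p K b (e, g2)"
    unfolding loc_sum_def frac_set_def by blast
  have "loc_eq p K (loc_plus p a b) (loc_plus p (e, g1) (e, g2))" by (rule loc_plus_cong[OF a b])
  then have "loc_eq p K v (e, g1 + g2)" using v loc_plus_same_denom by (blast intro: loc_eq_trans)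
  then show "v \<in> frac_set p K e (ssum W1 W2)" unfolding frac_set_def using g ssum_mem by blast
next
  fix v assume "v \<in> frac_set p K e (ssum W1 W2)"
  then obtain g1 g2 where g: "g1 \<in> W1" "g2 \<in> W2" and v: "loc_eq p K v (e, g1 + g2)"
    unfolding frac_set_def ssum_def by blast
  have "(e, g1) \<in> frac_set p K e W1" "(e, g2) \<in> frac_set p K e W2"
    using g loc_eq_refl unfolding frac_set_def by blast+
  moreover have "loc_eq p K v (loc_plus p (e, g1) (e, g2))"
    using v loc_eq_sym[OF loc_plus_same_denom] by (rule loc_eq_trans)
  ultimately show "v \<in> loc_sum p K (frac_set p K e W1) (frac_set p K e W2)"
    unfolding loc_sum_def by blast
qed

lemma loc_eq_uminus:
  assumes "loc_eq p K (a, x) (b, y)"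
  shows "loc_eq p K (a, - x) (b, - y)"
proof -
  have "smul (p ^ b) (- x) - smul (p ^ a) (- y) = - (smul (p ^ b) x - smul (p ^ a) y)"
    by (rule ext) (simp add: smul_apply)
  moreover have "- (smul (p ^ b) x - smul (p ^ a) y) \<in> Ks"
    by (rule submodule_uminus[OF submodule_Ks]) (use assms in \<open>simp add: loc_eq_iff\<close>)
  ultimately show ?thesis unfolding loc_eq_iff by simp
qed

lemma loc_minus_frac_set_swap:
  assumes W: "is_submodule W" and vw: "loc_minus p v w \<in> frac_set p K e W"
  shows "loc_minus p w v \<in> frac_set p K e W"
proof -
  obtain a x where ax: "loc_minus p v w = (a, x)" by fastforce
  then have wv: "loc_minus p w v = (a, - x)" by (auto simp: loc_minus_def)
  obtain g where "g \<in> W" and "loc_eq p K (a, x) (e, g)" using vw ax unfolding frac_set_def by auto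
  then show ?thesis
    unfolding frac_set_def wv using submodule_uminus[OF W] loc_eq_uminus by blast
qed

lemma loc_minus_split: "loc_eq p K (loc_plus p (loc_minus p v w) (loc_minus p w u)) (loc_minus p v u)"
  unfolding loc_eq_iff loc_plus_def loc_minus_def using submodule_zero[OF submodule_Ks]
  by (simp add: smul_add smul_diff smul_smul power_add[symmetric] algebra_simps)

lemma loc_minus_frac_set_trans:
  assumes W: "is_submodule W"
    and vw: "loc_minus p v w \<in> frac_set p K e W" and wu: "loc_minus p w u \<in> frac_set p K e W"
  shows "loc_minus p v u \<in> frac_set p K e W"
proof -
  obtain g1 g2 where g: "g1 \<in> W" "g2 \<in> W"
    and g1: "loc_eq p K (loc_minus p v w) (e, g1)" and g2: "loc_eq p K (loc_minus p w u) (e, g2)"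
    using vw wu unfolding frac_set_def by blast
  have "loc_eq p K (loc_minus p v u) (loc_plus p (loc_minus p v w) (loc_minus p w u))"
    by (rule loc_eq_sym[OF loc_minus_split])
  also have "loc_eq p K \<dots> (loc_plus p (e, g1) (e, g2))" by (rule loc_plus_cong[OF g1 g2])
  also have "loc_eq p K \<dots> (e, g1 + g2)" by (rule loc_plus_same_denom)
  finally show ?thesis unfolding frac_set_def using submodule_add[OF W g] by blast
qed

end

fun frac_sum_numerators :: "'r::comm_ring_1 \<Rightarrow> (nat \<Rightarrow> ('a \<Rightarrow> 'r) set) \<Rightarrow> nat \<Rightarrow> ('a \<Rightarrow> 'r) set" where
  "frac_sum_numerators p F 0 = {0}"
| "frac_sum_numerators p F (Suc i) = smul p ` ssum (frac_sum_numerators p F i) (F i)"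

lemma (in p_localization) frac_sum_eq_frac_set: "frac_sum p K F n = frac_set p K n (frac_sum_numerators p F n)"
proof (induction n)
  case (Suc i)
  then have "frac_sum p K F (Suc i) = frac_set p K i (ssum (frac_sum_numerators p F i) (F i))"
    by (simp add: loc_sum_frac_set)
  also have "\<dots> = frac_set p K (Suc i) (frac_sum_numerators p F (Suc i))"
    using frac_set_shift[of i _ 1] by simp
  finally show ?case .
qed simp

lemma submodule_frac_sum_numerators:
  "(\<And>i. is_submodule (F i)) \<Longrightarrow> is_submodule (frac_sum_numerators p F n)"
proof (induction n)
  case 0 then show ?case by (simp add: is_submodule_def)
qed (simp add: submodule_image_smul submodule_ssum)

lemma frac_sum_numerators_subset:
  "is_submodule W \<Longrightarrow> (\<And>i. F i \<subseteq> W) \<Longrightarrow> frac_sum_numerators p F n \<subseteq> W"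
proof (induction n)
  case (Suc n)
  then have "ssum (frac_sum_numerators p F n) (F n) \<subseteq> W" by (intro ssum_subset) auto
  then show ?case using Suc.prems(1) by (auto intro: submodule_smul)
qed (simp add: submodule_zero)

lemma finite_card_quotient_le:
  assumes f: "f ` A \<subseteq> F" and "finite F"
    and sym: "\<And>v w. P v w \<Longrightarrow> P w v"
    and trans: "\<And>v w u. P v w \<Longrightarrow> P w u \<Longrightarrow> P v u"
    and f_eq: "\<And>v w. v \<in> A \<Longrightarrow> w \<in> A \<Longrightarrow> f v = f w \<Longrightarrow> P v w"
  shows "finite (A // {(v, w). v \<in> A \<and> w \<in> A \<and> P v w}) \<and>
         card (A // {(v, w). v \<in> A \<and> w \<in> A \<and> P v w}) \<le> card F"
proof -
  let ?R = "{(v, w). v \<in> A \<and> w \<in> A \<and> P v w}"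
  define class_of where "class_of y = ?R `` {SOME v. v \<in> A \<and> f v = y}" for y
  have "A // ?R \<subseteq> class_of ` F"
  proof
    fix C assume "C \<in> A // ?R"
    then obtain v where v: "v \<in> A" and C: "C = ?R `` {v}" unfolding quotient_def by blast
    define v' where "v' = (SOME v'. v' \<in> A \<and> f v' = f v)"
    have v': "v' \<in> A" "f v' = f v" using someI_ex[of "\<lambda>v'. v' \<in> A \<and> f v' = f v"] v unfolding v'_def by blast+
    then have "P v' v" "P v v'" using f_eq[OF v'(1) v] sym by blast+
    then have "?R `` {v} = ?R `` {v'}" using trans v v' by blast
    then show "C \<in> class_of ` F" using f v unfolding class_of_def C v'_def by blast
  qed
  then show ?thesis
    using \<open>finite F\<close> by (meson card_image_le finite_imageI finite_subset card_mono le_trans)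
qed

text \<open>Two elements of A whose numerators have the same coefficients modulo p^e differ by a
  combination of ys.\<close>

lemma card_loc_cosets_le:
  fixes K :: "('x ltree \<Rightarrow> 'p::card2 padic_int) set"
  assumes K: "is_submodule K" and W: "is_submodule W"
    and A: "A \<subseteq> frac_set padic_p K e (span_modulo K ys)"
    and ys: "\<And>cs. (0, lincomb cs ys) \<in> frac_set padic_p K e' W"
  shows "finite (loc_cosets padic_p K A (frac_set padic_p K e' W)) \<and>
    card (loc_cosets padic_p K A (frac_set padic_p K e' W)) \<le> (CARD('p) ^ e) ^ length ys"
proof -
  interpret p_localization padic_p K by unfold_locales (rule K)
  define num where "num v = (SOME y. y \<in> span_modulo K ys \<and> loc_eq padic_p K v (e, y))" for v
  have num: "num v \<in> span_modulo K ys \<and> loc_eq padic_p K v (e, num v)" if "v \<in> A" for v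
  proof -
    have "\<exists>y. y \<in> span_modulo K ys \<and> loc_eq padic_p K v (e, y)"
      using A that unfolding frac_set_def by blast
    then show ?thesis unfolding num_def by (rule someI_ex)
  qed
  let ?V = "residue_vectors (int CARD('p)) e (length ys)"
  have "finite (A // {(v, w). v \<in> A \<and> w \<in> A \<and> loc_minus padic_p v w \<in> frac_set padic_p K e' W}) \<and>
    card (A // {(v, w). v \<in> A \<and> w \<in> A \<and> loc_minus padic_p v w \<in> frac_set padic_p K e' W}) \<le> card ?V"
  proof (rule finite_card_quotient_le[where f = "\<lambda>v. coeff_residues e K ys (num v)"])
    show "(\<lambda>v. coeff_residues e K ys (num v)) ` A \<subseteq> ?V"
      using num by (auto intro: coeff_residues_mem)
  next
    fix v w assume v: "v \<in> A" and w: "w \<in> A"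
      and eq: "coeff_residues e K ys (num v) = coeff_residues e K ys (num w)"
    obtain cs where cs: "num v - num w - smul (padic_p ^ e) (lincomb cs ys) \<in> K"
      using coeff_residues_eq[OF K _ _ eq] num[OF v] num[OF w] by blast
    have "loc_eq padic_p K (loc_minus padic_p v w) (loc_minus padic_p (e, num v) (e, num w))"
      using num[OF v] num[OF w] by (intro loc_minus_cong) simp_all
    also have "loc_eq padic_p K \<dots> (e, num v - num w)" by (rule loc_minus_same_denom)
    also have "loc_eq padic_p K \<dots> (e, smul (padic_p ^ e) (lincomb cs ys))"
      using cs subset_saturation unfolding loc_eq_same_denom by blast
    also have "loc_eq padic_p K \<dots> (0, lincomb cs ys)" using loc_eq_scale[of 0 e] by simp
    finally show "loc_minus padic_p v w \<in> frac_set padic_p K e' W" by (rule frac_set_loc_eq[OF ys])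
  qed (simp add: finite_residue_vectors, erule loc_minus_frac_set_swap[OF W],
      erule loc_minus_frac_set_trans[OF W])
  moreover have "card ?V = (CARD('p) ^ e) ^ length ys"
    by (simp add: card_residue_vectors nat_power_eq)
  ultimately show ?thesis unfolding loc_cosets_def by simp
qed

lemma submodule_lc_ideal: "is_lc_ideal X c I \<Longrightarrow> is_submodule I"
  unfolding is_lc_ideal_def is_submodule_def by blast

lemma lc_comm_subset:
  assumes I: "is_lc_ideal X c I"
  shows "lc_comm X c I i \<subseteq> I"
proof (induction i)
  case (Suc i)
  then have "brs (lc_comm X c I i) (magma_alg X) \<subseteq> I"
    using I unfolding is_lc_ideal_def by (intro brs_subset submodule_lc_ideal[OF I]) blast
  then show ?case using I unfolding is_lc_ideal_def by (simp add: ssum_subset submodule_lc_ideal[OF I])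
qed simp

lemma submodule_lc_comm: "is_lc_ideal X c I \<Longrightarrow> is_submodule (lc_comm X c I i)"
  by (cases i) (simp_all add: submodule_lc_ideal submodule_ssum submodule_brs submodule_free_lcs)

lemma lc_lcs_subset: "lc_lcs X c i \<subseteq> (magma_alg X :: ('x ltree \<Rightarrow> 'r::comm_ring_1) set)"
proof (induction i)
  case (Suc i)
  then have "brs (lc_lcs X c i) (magma_alg X) \<subseteq> (magma_alg X :: ('x ltree \<Rightarrow> 'r) set)"
    by (intro brs_subset submodule_magma_alg) (auto intro: br_magma_alg)
  then show ?case by (simp add: ssum_subset submodule_magma_alg free_lcs_subset)
qed simp

lemma magma_alg_span_modulo:
  assumes X: "finite X"
  obtains gs :: "('x ltree \<Rightarrow> 'r::comm_ring_1) list" where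
    "magma_alg X \<subseteq> span_modulo (free_lcs X c) gs" "set gs \<subseteq> magma_alg X"
    "length gs \<le> num_trees_bound (card X) c"
proof -
  have fin: "finite (trees_upto X c)" and card: "card (trees_upto X c) \<le> num_trees_bound (card X) c"
    using finite_card_trees_upto[OF X] by blast+
  obtain ts where ts: "set ts = trees_upto X c" "distinct ts"
    using finite_distinct_list[OF fin] by blast
  define gs where "gs = (map tree_indicator ts :: ('x ltree \<Rightarrow> 'r) list)"
  have "x \<in> span_modulo (free_lcs X c) gs" if x: "x \<in> magma_alg X" for x
  proof -
    have "lincomb (map x ts) gs = (\<Sum>t\<in>trees_upto X c. smul (x t) (tree_indicator t))"
      unfolding gs_def lincomb_map_map ts(1)[symmetric] by (rule sum.distinct_set_conv_list[OF ts(2), symmetric])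
    then have "x - lincomb (map x ts) gs \<in> free_lcs X c" using magma_alg_decomp[OF X x, of c] by simp
    then show ?thesis unfolding span_modulo_def gs_def by (intro CollectI exI[of _ "map x ts"]) simp
  qed
  moreover have "set gs \<subseteq> magma_alg X"
    using ts(1) unfolding gs_def by (auto simp: trees_upto_def intro: tree_indicator_magma_alg)
  moreover have "length gs \<le> num_trees_bound (card X) c"
    using card distinct_card[OF ts(2)] ts(1) unfolding gs_def by simp
  ultimately show ?thesis by (rule that[OF subsetI])
qed

lemma card_ideal_hat_cosets_le:
  fixes I :: "('x ltree \<Rightarrow> 'p::card2 padic_int) set" and X :: "'x set" and c :: nat
  defines "K \<equiv> nil_rel X c"
  assumes p: "prime CARD('p)" and X: "finite X" and I: "is_lc_ideal X c I"
    and A_Ihat: "A \<subseteq> frac_sum padic_p K (lc_comm X c I) c"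
  shows "finite (loc_cosets padic_p K A (frac_set padic_p K 0 I)) \<and>
    card (loc_cosets padic_p K A (frac_set padic_p K 0 I)) \<le> (CARD('p) ^ c) ^ num_trees_bound (card X) c"
proof -
  interpret p_localization padic_p K by unfold_locales (simp add: K_def submodule_free_lcs)
  have I_mod: "is_submodule I" by (rule submodule_lc_ideal[OF I])
  obtain gs :: "('x ltree \<Rightarrow> 'p padic_int) list" where
    "magma_alg X \<subseteq> span_modulo K gs" and gs: "length gs \<le> num_trees_bound (card X) c"
    using magma_alg_span_modulo[OF X] unfolding K_def by blast
  moreover have "K \<subseteq> I" "I \<subseteq> magma_alg X" using I unfolding is_lc_ideal_def K_def by blast+
  ultimately obtain ys where ys: "length ys = length gs" "set ys \<subseteq> I" "I \<subseteq> span_modulo K ys"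
    using span_modulo_generators[OF p submodule_K I_mod] by blast
  have "A \<subseteq> frac_set padic_p K c (frac_sum_numerators padic_p (lc_comm X c I) c)"
    using A_Ihat unfolding frac_sum_eq_frac_set .
  also have "\<dots> \<subseteq> frac_set padic_p K c (span_modulo K ys)"
    by (intro frac_set_mono order_trans[OF frac_sum_numerators_subset ys(3)] I_mod lc_comm_subset[OF I])
  finally have A: "A \<subseteq> frac_set padic_p K c (span_modulo K ys)" .
  have "(0, lincomb cs ys) \<in> frac_set padic_p K 0 I" for cs
    unfolding frac_set_def using lincomb_mem[OF I_mod ys(2)] loc_eq_refl by blast
  then have "finite (loc_cosets padic_p K A (frac_set padic_p K 0 I)) \<and>
    card (loc_cosets padic_p K A (frac_set padic_p K 0 I)) \<le> (CARD('p) ^ c) ^ length ys"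
    by (rule card_loc_cosets_le[OF submodule_K I_mod A])
  moreover have "(CARD('p) ^ c) ^ length ys \<le> (CARD('p) ^ c) ^ num_trees_bound (card X) c"
    using gs ys(1) by (intro power_increasing) simp_all
  ultimately show ?thesis by linarith
qed

lemma card_lie_hat_cosets_le:
  fixes I :: "('x ltree \<Rightarrow> 'p::card2 padic_int) set"
  assumes X: "finite X" and I: "is_lc_ideal X c I"
  defines "K \<equiv> nil_rel X c"
  defines "L \<equiv> frac_set padic_p K 0 (magma_alg X)" and "Ihat \<equiv> frac_sum padic_p K (lc_comm X c I) c"
    and "Lhat \<equiv> frac_sum padic_p K (lc_lcs X c) c"
  shows "finite (loc_cosets padic_p K Lhat (loc_sum padic_p K L Ihat)) \<and>
    card (loc_cosets padic_p K Lhat (loc_sum padic_p K L Ihat)) \<le> (CARD('p) ^ c) ^ num_trees_bound (card X) c"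
proof -
  interpret p_localization padic_p K by unfold_locales (simp add: K_def submodule_free_lcs)
  define M where "M = (magma_alg X :: ('x ltree \<Rightarrow> 'p padic_int) set)"
  define N where "N = frac_sum_numerators padic_p (lc_comm X c I) c"
  define W where "W = ssum (smul (padic_p ^ c) ` M) N"
  have N: "is_submodule N"
    unfolding N_def by (intro submodule_frac_sum_numerators submodule_lc_comm[OF I])
  have W: "is_submodule W"
    unfolding W_def M_def by (intro submodule_ssum submodule_image_smul submodule_magma_alg N)
  have L: "L = frac_set padic_p K c (smul (padic_p ^ c) ` M)"
    unfolding L_def M_def using frac_set_shift[of 0 _ c] by simp
  have LIhat: "loc_sum padic_p K L Ihat = frac_set padic_p K c W"
    unfolding L Ihat_def frac_sum_eq_frac_set W_def N_def by (rule loc_sum_frac_set)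
  obtain gs :: "('x ltree \<Rightarrow> 'p padic_int) list" where gs: "M \<subseteq> span_modulo K gs"
    "set gs \<subseteq> M" "length gs \<le> num_trees_bound (card X) c"
    using magma_alg_span_modulo[OF X] unfolding K_def M_def by blast
  have "Lhat \<subseteq> frac_set padic_p K c (span_modulo K gs)"
    unfolding Lhat_def frac_sum_eq_frac_set
    by (intro frac_set_mono order_trans[OF frac_sum_numerators_subset gs(1)])
      (simp_all add: M_def submodule_magma_alg lc_lcs_subset)
  moreover have "(0, lincomb cs gs) \<in> frac_set padic_p K c W" for cs
  proof -
    have "(0, lincomb cs gs) \<in> L"
      unfolding L_def frac_set_def using lincomb_mem[OF submodule_magma_alg gs(2)[unfolded M_def]] loc_eq_refl
      by blast
    moreover have "smul (padic_p ^ c) ` M \<subseteq> W"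
      unfolding W_def using ssum_mem[OF _ submodule_zero[OF N]] by fastforce
    ultimately show ?thesis unfolding L using frac_set_mono by blast
  qed
  ultimately have "finite (loc_cosets padic_p K Lhat (frac_set padic_p K c W)) \<and>
    card (loc_cosets padic_p K Lhat (frac_set padic_p K c W)) \<le> (CARD('p) ^ c) ^ length gs"
    by (intro card_loc_cosets_le[OF submodule_K W])
  moreover have "(CARD('p) ^ c) ^ length gs \<le> (CARD('p) ^ c) ^ num_trees_bound (card X) c"
    using gs(3) by (intro power_increasing) simp_all
  ultimately show ?thesis unfolding LIhat by linarith
qed

theorem proposition3p5:
  fixes dummy :: "'p::card2 itself" and dummyx :: "'x itself"
  assumes "prime CARD('p)"
  shows "\<exists>B :: nat \<Rightarrow> nat \<Rightarrow> nat \<Rightarrow> nat.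
    \<forall>(c::nat) (d::nat) (X :: 'x set) (I :: ('x ltree \<Rightarrow> 'p padic_int) set).
      c \<ge> 1 \<longrightarrow> d \<ge> 1 \<longrightarrow> finite X \<longrightarrow> card X = d \<longrightarrow> is_lc_ideal X c I \<longrightarrow>
      (let p = (padic_p :: 'p padic_int); K = nil_rel X c;
           L = frac_set p K 0 (magma_alg X);
           Iimg = frac_set p K 0 I;
           Ihat = frac_sum p K (lc_comm X c I) c;
           Lhat = frac_sum p K (lc_lcs X c) c
       in finite (loc_cosets p K (L \<inter> Ihat) Iimg) \<and>
          card (loc_cosets p K (L \<inter> Ihat) Iimg) \<le> B CARD('p) c d \<and>
          finite (loc_cosets p K Lhat (loc_sum p K L Ihat)) \<and>
          card (loc_cosets p K Lhat (loc_sum p K L Ihat)) \<le> B CARD('p) c d)"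
  by (intro exI[of _ "\<lambda>q c d. (q ^ c) ^ num_trees_bound d c"] allI impI, hypsubst)
    (simp add: Let_def card_ideal_hat_cosets_le[OF assms] card_lie_hat_cosets_le Int_lower2)


end
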